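(* Let $\varphi:\mathbb B\to\mathbb B$ be slice regular with $\varphi(\mathbb B_I)\subseteq\mathbb B_I$ for some $I\in\mathbb S$. Then $C_\varphi f=f^{\odot}\varphi$ and $D_\varphi f=f_{\odot}\varphi$ are bounded operators on $H^2(\mathbb B)$ and $$\Big(\frac1{1-|\varphi(0)|^2}\Big)^{1/2}\le\|C_\varphi\|\le\Big(\frac{1+|\varphi(0)|}{1-|\varphi(0)|}\Big)^{1/2},\qquad\Big(\frac1{1-|\varphi(0)|^2}\Big)^{1/2}\le\|D_\varphi\|\le\Big(\frac{1+|\varphi(0)|}{1-|\varphi(0)|}\Big)^{1/2}.$$
   Context: $\mathbb H$ quaternions, $\mathbb S=\{q:q^2=-1\}$, $\mathbb C_I=\mathbb R+I\mathbb R$, $\mathbb B$ open unit ball, $\mathbb B_I=\mathbb B\cap\mathbb C_I$. Slice regular functions on $\mathbb B$ are convergent power series $\sum_nq^na_n$; $\ast$-product $\big(\sum q^na_n\big)\ast\big(\sum q^nb_n\big)=\sum_nq^n\sum_ka_kb_{n-k}$, $\varphi^{\ast0}=1$, $\varphi^{\ast n}=\varphi\ast\varphi^{\ast(n-1)}$. For $f=\sum q^na_n$: $f^{\odot}\varphi=\sum_n\varphi^{\ast n}a_n$, $f_{\odot}\varphi=\sum_na_n\ast\varphi^{\ast n}$. $H^2(\mathbb B)$: regular $f=\sum q^na_n$ with $\|f\|_2^2=\sum|a_n|^2<\infty$; $\|T\|=\sup_{\|f\|_2\le1}\|Tf\|_2$. *)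

theory Defs
  imports "HOL-Analysis.Analysis"
begin

text \<open>Quaternions are modelled as vectors in real^4 (components 1,2,3,4 = real, i, j, k
parts); the Euclidean norm is the quaternionic modulus. Quaternionic multiplication:\<close>

type_synonym quat = "real^4"

definition hmul :: "quat \<Rightarrow> quat \<Rightarrow> quat" where
  "hmul x y = (\<chi> i.
     if i = 1 then x$1*y$1 - x$2*y$2 - x$3*y$3 - x$4*y$4
     else if i = 2 then x$1*y$2 + x$2*y$1 + x$3*y$4 - x$4*y$3
     else if i = 3 then x$1*y$3 - x$2*y$4 + x$3*y$1 + x$4*y$2
     else x$1*y$4 + x$2*y$3 - x$3*y$2 + x$4*y$1)"

definition hone :: quat where
  "hone = (\<chi> i. if i = 1 then 1 else 0)"

primrec hpow :: "quat \<Rightarrow> nat \<Rightarrow> quat" where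
  "hpow q 0 = hone"
| "hpow q (Suc n) = hmul q (hpow q n)"

definition imag_units :: "quat set" where
  "imag_units = {q. hmul q q = - hone}"

definition slice :: "quat \<Rightarrow> quat set" where
  "slice I = {r *\<^sub>R hone + s *\<^sub>R I | r s. True}"

definition qball :: "quat set" where
  "qball = {q. norm q < 1}"

definition pseval :: "(nat \<Rightarrow> quat) \<Rightarrow> quat \<Rightarrow> quat" where
  "pseval a q = (\<Sum>n. hmul (hpow q n) (a n))"

definition slice_regular_ball :: "(nat \<Rightarrow> quat) \<Rightarrow> bool" where
  "slice_regular_ball a \<longleftrightarrow> (\<forall>q\<in>qball. summable (\<lambda>n. hmul (hpow q n) (a n)))"

definition represents :: "(quat \<Rightarrow> quat) \<Rightarrow> (nat \<Rightarrow> quat) \<Rightarrow> bool" where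
  "represents F c \<longleftrightarrow> (\<forall>q\<in>qball. ((\<lambda>n. hmul (hpow q n) (c n)) sums F q))"

definition sprod :: "(nat \<Rightarrow> quat) \<Rightarrow> (nat \<Rightarrow> quat) \<Rightarrow> nat \<Rightarrow> quat" where
  "sprod a b n = (\<Sum>k\<le>n. hmul (a k) (b (n - k)))"

primrec spow :: "(nat \<Rightarrow> quat) \<Rightarrow> nat \<Rightarrow> nat \<Rightarrow> quat" where
  "spow b 0 = (\<lambda>k. if k = 0 then hone else 0)"
| "spow b (Suc n) = sprod b (spow b n)"

definition H2 :: "(nat \<Rightarrow> quat) \<Rightarrow> bool" where
  "H2 a \<longleftrightarrow> summable (\<lambda>n. (norm (a n))^2)"

definition h2norm :: "(nat \<Rightarrow> quat) \<Rightarrow> real" where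
  "h2norm a = sqrt (\<Sum>n. (norm (a n))^2)"

text \<open>Operators given as pointwise series of regular functions:
  term a n q is the n-th summand at q for the function with coefficients a.\<close>

definition series_fun :: "((nat \<Rightarrow> quat) \<Rightarrow> nat \<Rightarrow> quat \<Rightarrow> quat) \<Rightarrow> (nat \<Rightarrow> quat) \<Rightarrow> quat \<Rightarrow> quat" where
  "series_fun T a q = (\<Sum>n. T a n q)"

text \<open>f^odot phi = sum_n phi^{*n} a_n and f_odot phi = sum_n a_n * phi^{*n}.\<close>

definition Cterm :: "(nat \<Rightarrow> quat) \<Rightarrow> (nat \<Rightarrow> quat) \<Rightarrow> nat \<Rightarrow> quat \<Rightarrow> quat" where
  "Cterm b a n q = hmul (pseval (spow b n) q) (a n)"

definition Dterm :: "(nat \<Rightarrow> quat) \<Rightarrow> (nat \<Rightarrow> quat) \<Rightarrow> nat \<Rightarrow> quat \<Rightarrow> quat" where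
  "Dterm b a n q = pseval (\<lambda>k. hmul (a n) (spow b n k)) q"

definition op_image_norms :: "((nat \<Rightarrow> quat) \<Rightarrow> nat \<Rightarrow> quat \<Rightarrow> quat) \<Rightarrow> real set" where
  "op_image_norms T = {h2norm c | a c. H2 a \<and> h2norm a \<le> 1 \<and> represents (series_fun T a) c}"

definition bounded_H2_op :: "((nat \<Rightarrow> quat) \<Rightarrow> nat \<Rightarrow> quat \<Rightarrow> quat) \<Rightarrow> bool" where
  "bounded_H2_op T \<longleftrightarrow>
     (\<forall>a. H2 a \<longrightarrow> (\<forall>q\<in>qball. summable (\<lambda>n. T a n q)) \<and>
                    (\<exists>c. H2 c \<and> represents (series_fun T a) c))
     \<and> bdd_above (op_image_norms T)"

definition opnorm :: "((nat \<Rightarrow> quat) \<Rightarrow> nat \<Rightarrow> quat \<Rightarrow> quat) \<Rightarrow> real" where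
  "opnorm T = Sup (op_image_norms T)"

end

theory Submission
  imports Defs "HOL-Complex_Analysis.Complex_Analysis"
begin

text \<open>
  Since \<open>\<phi>\<close> maps \<open>\<bbbB>\<^sub>I\<close> into \<open>\<complex>\<^sub>I\<close>, its coefficients lie in \<open>\<complex>\<^sub>I\<close>, and on \<open>\<complex>\<^sub>I\<close> it is a holomorphic
  self-map \<open>\<phi>\<^sub>I\<close> of the unit disc. Choose a unit \<open>J \<perp> I\<close> and split \<open>f = f\<^sub>1 + f\<^sub>2 J\<close> with \<open>f\<^sub>1, f\<^sub>2\<close>
  complex \<open>H\<^sup>2\<close> functions, so that \<open>\<parallel>f\<parallel>\<^sup>2 = \<parallel>f\<^sub>1\<parallel>\<^sup>2 + \<parallel>f\<^sub>2\<parallel>\<^sup>2\<close>. On \<open>\<complex>\<^sub>I\<close> both operators act componentwise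
  by classical composition operators: \<open>C\<^sub>\<phi>\<close> by \<open>(f\<^sub>1 \<circ> \<phi>\<^sub>I, f\<^sub>2 \<circ> \<phi>\<^sub>I)\<close> and \<open>D\<^sub>\<phi>\<close> by \<open>(f\<^sub>1 \<circ> \<phi>\<^sub>I, f\<^sub>2 \<circ> \<phi>\<^sub>I\<^sup>*)\<close> with
  \<open>\<phi>\<^sub>I\<^sup>*(z) = cnj (\<phi>\<^sub>I (cnj z))\<close>, because \<open>\<complex>\<^sub>I\<close> commutes with \<open>J\<close> up to conjugation. The representation
  formula extends these identities from \<open>\<complex>\<^sub>I\<close> to the whole ball, so the quaternionic bounds reduce to
  the complex ones. The upper bound is Littlewood's subordination principle with Harnack's inequality:
  \<open>|F|\<^sup>2\<close> is dominated by the Poisson integral \<open>U\<close> of its boundary values, \<open>U \<circ> \<phi>\<^sub>I\<close> is harmonic, hence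
  \<open>\<parallel>F \<circ> \<phi>\<^sub>I\<parallel>\<^sup>2 \<le> U(\<phi>\<^sub>I(0)) \<le> (1 + |\<phi>\<^sub>I(0)|)/(1 - |\<phi>\<^sub>I(0)|) \<parallel>F\<parallel>\<^sup>2\<close>. The lower bound comes from the
  normalized Szego kernel at \<open>\<phi>\<^sub>I(0)\<close>, whose image has constant coefficient of modulus
  \<open>(1 - |\<phi>\<^sub>I(0)|\<^sup>2)\<^sup>-\<^sup>1\<^sup>/\<^sup>2\<close>.
\<close>

no_notation fps_nth (infixl \<open>$\<close> 75)

lemma hmul_nth:
  "hmul x y $ 1 = x$1*y$1 - x$2*y$2 - x$3*y$3 - x$4*y$4"
  "hmul x y $ 2 = x$1*y$2 + x$2*y$1 + x$3*y$4 - x$4*y$3"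
  "hmul x y $ 3 = x$1*y$3 - x$2*y$4 + x$3*y$1 + x$4*y$2"
  "hmul x y $ 4 = x$1*y$4 + x$2*y$3 - x$3*y$2 + x$4*y$1"
  by (simp_all add: hmul_def)

lemma hone_nth: "hone$1 = 1" "hone$2 = 0" "hone$3 = 0" "hone$4 = 0"
  by (simp_all add: hone_def)

lemma quat_eq_iff: "(x::quat) = y \<longleftrightarrow> x$1 = y$1 \<and> x$2 = y$2 \<and> x$3 = y$3 \<and> x$4 = y$4"
  by (simp add: vec_eq_iff forall_4)

lemma quat_norm_sq: "(norm (x::quat))^2 = (x$1)^2 + (x$2)^2 + (x$3)^2 + (x$4)^2"
  by (simp add: norm_vec_def L2_set_def sum_4 real_norm_def)

lemma quat_inner: "inner (x::quat) y = x$1*y$1 + x$2*y$2 + x$3*y$3 + x$4*y$4"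
  by (simp add: inner_vec_def sum_4)

lemma hmul_assoc: "hmul (hmul x y) z = hmul x (hmul y z)"
  by (simp add: quat_eq_iff hmul_nth algebra_simps)

lemma hmul_hone_left [simp]: "hmul hone x = x"
  and hmul_hone_right [simp]: "hmul x hone = x"
  and hmul_zero_left [simp]: "hmul 0 x = 0"
  and hmul_zero_right [simp]: "hmul x 0 = 0"
  by (simp_all add: quat_eq_iff hmul_nth hone_nth)

lemma hmul_add_left: "hmul (x + y) z = hmul x z + hmul y z"
  and hmul_add_right: "hmul z (x + y) = hmul z x + hmul z y"
  and hmul_diff_left: "hmul (x - y) z = hmul x z - hmul y z"
  and hmul_diff_right: "hmul z (x - y) = hmul z x - hmul z y"
  and hmul_minus_left: "hmul (- x) z = - hmul x z"
  and hmul_minus_right: "hmul z (- x) = - hmul z x"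
  and hmul_scaleR_left: "hmul (r *\<^sub>R x) z = r *\<^sub>R hmul x z"
  and hmul_scaleR_right: "hmul z (r *\<^sub>R x) = r *\<^sub>R hmul z x"
  by (simp_all add: quat_eq_iff hmul_nth algebra_simps)

lemma norm_hmul: "norm (hmul x y) = norm x * norm y"
proof -
  have "(norm (hmul x y))^2 = (norm x * norm y)^2"
    unfolding power_mult_distrib quat_norm_sq hmul_nth by algebra
  then show ?thesis by (simp add: power2_eq_iff_nonneg)
qed

lemma bounded_bilinear_hmul: "bounded_bilinear hmul"
  by (rule bounded_bilinear.intro)
     (auto simp: hmul_add_left hmul_add_right hmul_scaleR_left hmul_scaleR_right norm_hmul
           intro: exI[of _ 1])

lemma bounded_linear_hmul_left: "bounded_linear (\<lambda>x. hmul x c)"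
  by (rule bounded_bilinear.bounded_linear_left[OF bounded_bilinear_hmul])

lemma bounded_linear_hmul_right: "bounded_linear (hmul c)"
  by (rule bounded_bilinear.bounded_linear_right[OF bounded_bilinear_hmul])

lemma hpow_scaleR_hone: "hpow (x *\<^sub>R hone) n = (x ^ n) *\<^sub>R hone"
  by (induction n) (simp_all add: hmul_scaleR_left)

lemma hpow_zero: "hpow 0 n = (if n = 0 then hone else 0)"
  by (cases n) simp_all

lemma imag_unitsD:
  assumes "I \<in> imag_units"
  shows "I$1 = 0" "(I$2)^2 + (I$3)^2 + (I$4)^2 = 1"
proof -
  have "hmul I I = - hone" using assms by (simp add: imag_units_def)
  then have e1: "(I$1)^2 - (I$2)^2 - (I$3)^2 - (I$4)^2 = -1"
    and e2: "I$1*I$2 = 0" "I$1*I$3 = 0" "I$1*I$4 = 0"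
    by (auto simp: quat_eq_iff hmul_nth hone_nth power2_eq_square algebra_simps)
  show "I$1 = 0"
  proof (rule ccontr)
    assume "I$1 \<noteq> 0"
    with e2 have "I$2 = 0" "I$3 = 0" "I$4 = 0" by auto
    with e1 have "(I$1)^2 = -1" by simp
    then show False using zero_le_power2[of "I$1"] by linarith
  qed
  with e1 show "(I$2)^2 + (I$3)^2 + (I$4)^2 = 1" by simp
qed

lemma imag_unitsI:
  assumes "u$1 = 0" "(u$2)^2 + (u$3)^2 + (u$4)^2 = 1"
  shows "u \<in> imag_units"
  using assms unfolding imag_units_def
  by (simp add: quat_eq_iff hmul_nth hone_nth power2_eq_square algebra_simps)

definition slice_emb :: "quat \<Rightarrow> complex \<Rightarrow> quat" where
  "slice_emb I z = Re z *\<^sub>R hone + Im z *\<^sub>R I"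

lemma slice_emb_nth:
  "I$1 = 0 \<Longrightarrow> slice_emb I z $ 1 = Re z"
  "slice_emb I z $ 2 = Im z * I$2" "slice_emb I z $ 3 = Im z * I$3" "slice_emb I z $ 4 = Im z * I$4"
  by (simp_all add: slice_emb_def hone_nth)

lemma slice_emb_add: "slice_emb I (z + w) = slice_emb I z + slice_emb I w"
  and slice_emb_diff: "slice_emb I (z - w) = slice_emb I z - slice_emb I w"
  and slice_emb_zero [simp]: "slice_emb I 0 = 0"
  and slice_emb_one: "slice_emb I 1 = hone"
  and slice_emb_scaleR: "slice_emb I (r *\<^sub>R z) = r *\<^sub>R slice_emb I z"
  and slice_emb_of_real: "slice_emb I (of_real r) = r *\<^sub>R hone"
  by (simp_all add: slice_emb_def algebra_simps)

lemma bounded_linear_slice_emb: "bounded_linear (slice_emb I)"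
proof -
  have "linear (slice_emb I)" by (rule linearI) (simp_all add: slice_emb_add slice_emb_scaleR)
  then show ?thesis by (simp add: linear_conv_bounded_linear)
qed

lemma sums_slice_emb: "f sums A \<Longrightarrow> (\<lambda>k. slice_emb I (f k)) sums slice_emb I A"
  by (rule bounded_linear.sums[OF bounded_linear_slice_emb])

lemma hmul_slice_emb:
  assumes "I \<in> imag_units"
  shows "hmul (slice_emb I z) (slice_emb I w) = slice_emb I (z * w)"
proof -
  have "hmul I I = - hone" using assms by (simp add: imag_units_def)
  then show ?thesis unfolding slice_emb_def
    by (simp add: hmul_add_left hmul_add_right hmul_scaleR_left hmul_scaleR_right algebra_simps)
qed

lemma norm_slice_emb:
  assumes "I \<in> imag_units"
  shows "norm (slice_emb I z) = norm z"
proof -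
  note I = imag_unitsD[OF assms]
  have "(norm (slice_emb I z))^2 = (Re z)^2 + (Im z)^2 * ((I$2)^2 + (I$3)^2 + (I$4)^2)"
    unfolding quat_norm_sq slice_emb_nth(1)[OF I(1)] slice_emb_nth(2-4)
    by (simp add: power_mult_distrib algebra_simps)
  also have "\<dots> = (norm z)^2" using I(2) by (simp add: cmod_power2)
  finally show ?thesis by (simp add: power2_eq_iff_nonneg)
qed

lemma hpow_slice_emb:
  assumes "I \<in> imag_units"
  shows "hpow (slice_emb I z) n = slice_emb I (z ^ n)"
  by (induction n) (simp_all add: slice_emb_one hmul_slice_emb[OF assms])

lemma slice_emb_sum: "slice_emb I (sum f A) = (\<Sum>x\<in>A. slice_emb I (f x))"
  by (induct A rule: infinite_finite_induct) (simp_all add: slice_emb_add)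

lemma slice_emb_in_qball_iff:
  "I \<in> imag_units \<Longrightarrow> slice_emb I z \<in> qball \<longleftrightarrow> norm z < 1"
  by (simp add: qball_def norm_slice_emb)

lemma sums_hmul_hpow_slice_emb:
  assumes "I \<in> imag_units" and "(\<lambda>k. p k * z^k) sums s"
  shows "(\<lambda>k. hmul (hpow (slice_emb I z) k) (slice_emb I (p k))) sums slice_emb I s"
  using sums_slice_emb[OF assms(2), of I]
  by (simp add: hpow_slice_emb[OF assms(1)] hmul_slice_emb[OF assms(1)] mult.commute)

section \<open>The splitting \<open>\<bbbH> = \<complex>\<^sub>I \<oplus> \<complex>\<^sub>I J\<close>\<close>

definition perp_unit :: "quat \<Rightarrow> quat" where
  "perp_unit I = (if I$2 = 0 \<and> I$3 = 0 then (\<chi> i. if i = 2 then 1 else 0)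
     else (1 / sqrt ((I$2)^2 + (I$3)^2)) *\<^sub>R (\<chi> i. if i = 2 then - I$3 else if i = 3 then I$2 else 0))"

lemma perp_unit_nth:
  assumes "I \<in> imag_units"
  shows "perp_unit I $ 1 = 0" "(perp_unit I $ 2)^2 + (perp_unit I $ 3)^2 + (perp_unit I $ 4)^2 = 1"
    "I$2 * perp_unit I $ 2 + I$3 * perp_unit I $ 3 + I$4 * perp_unit I $ 4 = 0"
proof -
  show "perp_unit I $ 1 = 0" by (simp add: perp_unit_def)
  show "(perp_unit I $ 2)^2 + (perp_unit I $ 3)^2 + (perp_unit I $ 4)^2 = 1"
  proof (cases "I$2 = 0 \<and> I$3 = 0")
    case False
    then have p: "(I$2)^2 + (I$3)^2 > 0" by (simp add: sum_power2_gt_zero_iff)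
    then show ?thesis
      using False by (simp add: perp_unit_def power_divide add_divide_distrib[symmetric] add.commute)
  qed (simp add: perp_unit_def)
  show "I$2 * perp_unit I $ 2 + I$3 * perp_unit I $ 3 + I$4 * perp_unit I $ 4 = 0"
    by (simp add: perp_unit_def algebra_simps)
qed

lemma hmul_perp_unit_slice_emb:
  assumes "I \<in> imag_units"
  shows "hmul (perp_unit I) (slice_emb I z) = hmul (slice_emb I (cnj z)) (perp_unit I)"
proof -
  have "hmul I (perp_unit I) = - hmul (perp_unit I) I"
    using imag_unitsD(1)[OF assms] perp_unit_nth[OF assms]
    unfolding quat_eq_iff vector_uminus_component hmul_nth by (simp add: algebra_simps)
  then show ?thesis unfolding slice_emb_def
    by (simp add: hmul_add_left hmul_add_right hmul_scaleR_left hmul_scaleR_right hmul_diff_left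
        hmul_minus_left hmul_minus_right)
qed

text \<open>Writing \<open>J = perp_unit I\<close>, every quaternion is \<open>z + w J\<close> with \<open>z, w \<in> \<complex>\<^sub>I\<close>; the
  components are the inner products with the orthonormal basis \<open>1, I, J, I J\<close>.\<close>

definition slice_pair :: "quat \<Rightarrow> complex \<Rightarrow> complex \<Rightarrow> quat" where
  "slice_pair I z w = slice_emb I z + hmul (slice_emb I w) (perp_unit I)"

definition slice_fst :: "quat \<Rightarrow> quat \<Rightarrow> complex" where
  "slice_fst I q = Complex (inner q hone) (inner q I)"

definition slice_snd :: "quat \<Rightarrow> quat \<Rightarrow> complex" where
  "slice_snd I q = Complex (inner q (perp_unit I)) (inner q (hmul I (perp_unit I)))"

lemma norm_slice_pair:
  assumes "I \<in> imag_units"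
  shows "(norm (slice_pair I z w))^2 = (norm z)^2 + (norm w)^2"
proof -
  note I = imag_unitsD[OF assms] and J = perp_unit_nth[OF assms]
  define a b c where "a = I$2" and "b = I$3" and "c = I$4"
  define e f g where "e = perp_unit I $ 2" and "f = perp_unit I $ 3" and "g = perp_unit I $ 4"
  have "a^2+b^2+c^2 = 1" "e^2+f^2+g^2 = 1" "a*e+b*f+c*g = 0"
    using I J by (simp_all add: a_def b_def c_def e_def f_def g_def)
  then show ?thesis
    unfolding slice_pair_def quat_norm_sq cmod_power2 hmul_nth vector_add_component
      slice_emb_nth(1)[OF I(1)] slice_emb_nth(2-4) J(1)
      a_def[symmetric] b_def[symmetric] c_def[symmetric] e_def[symmetric] f_def[symmetric] g_def[symmetric]
    by algebra
qed

lemma slice_pair_fst_snd: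
  assumes "I \<in> imag_units"
  shows "slice_pair I (slice_fst I q) (slice_snd I q) = q"
proof -
  note I = imag_unitsD[OF assms] and J = perp_unit_nth[OF assms]
  define a b c where "a = I$2" and "b = I$3" and "c = I$4"
  define e f g where "e = perp_unit I $ 2" and "f = perp_unit I $ 3" and "g = perp_unit I $ 4"
  have "a^2+b^2+c^2 = 1" "e^2+f^2+g^2 = 1" "a*e+b*f+c*g = 0"
    using I J by (simp_all add: a_def b_def c_def e_def f_def g_def)
  then show ?thesis
    unfolding slice_pair_def quat_eq_iff hmul_nth vector_add_component slice_emb_nth(1)[OF I(1)]
      slice_emb_nth(2-4) slice_fst_def slice_snd_def quat_inner complex.sel hone_nth I(1) J(1)
      a_def[symmetric] b_def[symmetric] c_def[symmetric] e_def[symmetric] f_def[symmetric] g_def[symmetric]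
    by algebra
qed

lemma slice_pair_diff: "slice_pair I z w - slice_pair I z' w' = slice_pair I (z - z') (w - w')"
  by (simp add: slice_pair_def slice_emb_diff hmul_diff_left)

lemma slice_pair_inject:
  assumes "I \<in> imag_units" and "slice_pair I z w = slice_pair I z' w'"
  shows "z = z'" "w = w'"
proof -
  have "(norm (z - z'))^2 + (norm (w - w'))^2 = 0"
    using norm_slice_pair[OF assms(1), of "z - z'" "w - w'"] assms(2) slice_pair_diff[of I z w z' w']
    by simp
  then show "z = z'" "w = w'" by (simp_all add: add_nonneg_eq_0_iff)
qed

lemma slice_fst_slice_pair: "I \<in> imag_units \<Longrightarrow> slice_fst I (slice_pair I z w) = z"
  and slice_snd_slice_pair: "I \<in> imag_units \<Longrightarrow> slice_snd I (slice_pair I z w) = w"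
  using slice_pair_inject slice_pair_fst_snd by metis+

lemma slice_emb_eq_slice_pair: "slice_emb I z = slice_pair I z 0"
  by (simp add: slice_pair_def)

lemma slice_fst_slice_emb: "I \<in> imag_units \<Longrightarrow> slice_fst I (slice_emb I z) = z"
  and slice_snd_slice_emb: "I \<in> imag_units \<Longrightarrow> slice_snd I (slice_emb I z) = 0"
  by (simp_all add: slice_emb_eq_slice_pair slice_fst_slice_pair slice_snd_slice_pair)

lemma norm_sq_slice_fst_snd:
  assumes "I \<in> imag_units"
  shows "(norm q)^2 = (norm (slice_fst I q))^2 + (norm (slice_snd I q))^2"
  using norm_slice_pair[OF assms, of "slice_fst I q" "slice_snd I q"] slice_pair_fst_snd[OF assms]
  by simp

lemma bounded_linear_slice_fst: "bounded_linear (slice_fst I)"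
proof -
  have "linear (slice_fst I)"
    by (rule linearI) (simp_all add: slice_fst_def complex_eq_iff inner_add_left)
  then show ?thesis by (simp add: linear_conv_bounded_linear)
qed

lemma sums_slice_pair:
  assumes "f sums A" "g sums B"
  shows "(\<lambda>k. slice_pair I (f k) (g k)) sums slice_pair I A B"
  unfolding slice_pair_def
  by (intro sums_add sums_slice_emb bounded_linear.sums[OF bounded_linear_hmul_left] assms)

lemma hmul_slice_emb_slice_pair:
  assumes "I \<in> imag_units"
  shows "hmul (slice_emb I u) (slice_pair I z w) = slice_pair I (u * z) (u * w)"
  unfolding slice_pair_def
  by (simp add: hmul_add_right hmul_assoc[symmetric] hmul_slice_emb[OF assms])

lemma hmul_slice_pair_slice_emb:
  assumes "I \<in> imag_units"
  shows "hmul (slice_pair I z w) (slice_emb I p) = slice_pair I (z * p) (w * cnj p)"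
  unfolding slice_pair_def
  by (simp add: hmul_add_left hmul_assoc hmul_perp_unit_slice_emb[OF assms] hmul_slice_emb[OF assms]
      hmul_assoc[symmetric])

section \<open>The representation formula\<close>

lemma quat_slice_emb_cases:
  assumes "I \<in> imag_units"
  obtains K w where "K \<in> imag_units" "q = slice_emb K w"
proof (cases "q$2 = 0 \<and> q$3 = 0 \<and> q$4 = 0")
  case True
  then have "q = slice_emb I (of_real (q$1))"
    by (simp add: slice_emb_of_real quat_eq_iff hone_nth)
  then show ?thesis using that assms by blast
next
  case False
  define n where "n = sqrt ((q$2)^2 + (q$3)^2 + (q$4)^2)"
  have "(q$2)^2 + (q$3)^2 + (q$4)^2 > 0"
    using False by (smt (verit) power2_less_eq_zero_iff zero_le_power2)
  then have n: "n > 0" "n^2 = (q$2)^2 + (q$3)^2 + (q$4)^2" by (simp_all add: n_def)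
  define K where "K = (1/n) *\<^sub>R (\<chi> i. if i = 1 then 0 else q$i)"
  have K: "K$1 = 0" "K$2 = q$2/n" "K$3 = q$3/n" "K$4 = q$4/n" by (simp_all add: K_def)
  have "(K$2)^2 + (K$3)^2 + (K$4)^2 = 1"
    unfolding K using n by (simp add: power_divide add_divide_distrib[symmetric] flip: n(2))
  then have "K \<in> imag_units" using imag_unitsI K(1) by blast
  moreover have "q = slice_emb K (Complex (q$1) n)"
    unfolding quat_eq_iff slice_emb_nth(1)[OF K(1)] slice_emb_nth(2-4) K using n by simp
  ultimately show ?thesis using that by blast
qed

text \<open>Values on the slice \<open>\<complex>\<^sub>K\<close> are an affine combination of values at \<open>w\<close> and \<open>cnj w\<close> in
  \<open>\<complex>\<^sub>I\<close>: \<open>f(x + yK) = (1 - KI)/2 f(x + yI) + (1 + KI)/2 f(x - yI)\<close>.\<close>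

definition repr_formula :: "quat \<Rightarrow> quat \<Rightarrow> quat \<Rightarrow> quat \<Rightarrow> quat" where
  "repr_formula I K S1 S2 = (1/2) *\<^sub>R (S1 + S2) - (1/2) *\<^sub>R hmul (hmul K I) (S1 - S2)"

lemma slice_emb_repr_formula:
  assumes "I \<in> imag_units"
  shows "slice_emb K u = repr_formula I K (slice_emb I u) (slice_emb I (cnj u))"
proof -
  have "hmul I I = - hone" using assms by (simp add: imag_units_def)
  moreover have "slice_emb I u - slice_emb I (cnj u) = (2 * Im u) *\<^sub>R I"
    and "slice_emb I u + slice_emb I (cnj u) = (2 * Re u) *\<^sub>R hone"
    by (simp_all add: slice_emb_def vec_eq_iff)
  ultimately show ?thesis
    by (simp add: repr_formula_def slice_emb_def hmul_scaleR_right hmul_assoc hmul_minus_right)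
qed

lemma repr_formula_hmul_right:
  "hmul (repr_formula I K S1 S2) c = repr_formula I K (hmul S1 c) (hmul S2 c)"
  unfolding repr_formula_def
  by (simp add: hmul_diff_left hmul_add_left hmul_scaleR_left hmul_assoc hmul_diff_right)

lemma sums_repr_formula:
  assumes "f sums S1" "g sums S2"
  shows "(\<lambda>n. repr_formula I K (f n) (g n)) sums repr_formula I K S1 S2"
  unfolding repr_formula_def
  by (intro sums_diff sums_scaleR_right sums_add bounded_linear.sums[OF bounded_linear_hmul_right] assms)

lemma hmul_hpow_repr_formula:
  assumes "I \<in> imag_units" "K \<in> imag_units"
  shows "hmul (hpow (slice_emb K w) k) c =
    repr_formula I K (hmul (hpow (slice_emb I w) k) c) (hmul (hpow (slice_emb I (cnj w)) k) c)"
  using slice_emb_repr_formula[OF assms(1), of K "w^k"]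
  by (simp add: hpow_slice_emb assms repr_formula_hmul_right)

lemma pseval_repr_formula:
  assumes "I \<in> imag_units" "K \<in> imag_units"
    and "summable (\<lambda>k. hmul (hpow (slice_emb I w) k) (c k))"
    and "summable (\<lambda>k. hmul (hpow (slice_emb I (cnj w)) k) (c k))"
  shows "pseval c (slice_emb K w) = repr_formula I K (pseval c (slice_emb I w)) (pseval c (slice_emb I (cnj w)))"
proof -
  have "(\<lambda>k. hmul (hpow (slice_emb K w) k) (c k)) sums
      repr_formula I K (pseval c (slice_emb I w)) (pseval c (slice_emb I (cnj w)))"
    unfolding hmul_hpow_repr_formula[OF assms(1,2)] pseval_def
    by (rule sums_repr_formula[OF summable_sums[OF assms(3)] summable_sums[OF assms(4)]])
  then show ?thesis by (simp add: pseval_def sums_unique[symmetric])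
qed

lemma sums_extend_from_slice:
  assumes I: "I \<in> imag_units"
    and T_repr: "\<And>n K w. K \<in> imag_units \<Longrightarrow> norm w < 1 \<Longrightarrow>
        T n (slice_emb K w) = repr_formula I K (T n (slice_emb I w)) (T n (slice_emb I (cnj w)))"
    and T_sums: "\<And>w. norm w < 1 \<Longrightarrow> (\<lambda>n. T n (slice_emb I w)) sums S w"
    and c_sums: "\<And>w. norm w < 1 \<Longrightarrow> (\<lambda>k. hmul (hpow (slice_emb I w) k) (c k)) sums S w"
    and q: "q \<in> qball"
  shows "summable (\<lambda>n. T n q)" "(\<lambda>k. hmul (hpow q k) (c k)) sums (\<Sum>n. T n q)"
proof -
  obtain K w where K: "K \<in> imag_units" and q_eq: "q = slice_emb K w"
    using quat_slice_emb_cases[OF I] by blast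
  have w: "norm w < 1" "norm (cnj w) < 1" using q q_eq slice_emb_in_qball_iff[OF K] by simp_all
  have T: "(\<lambda>n. T n q) sums repr_formula I K (S w) (S (cnj w))"
    unfolding q_eq T_repr[OF K w(1)] by (rule sums_repr_formula[OF T_sums T_sums[OF w(2)]]) (rule w)
  then show "summable (\<lambda>n. T n q)" by (rule sums_summable)
  have "(\<lambda>k. hmul (hpow q k) (c k)) sums repr_formula I K (S w) (S (cnj w))"
    unfolding q_eq hmul_hpow_repr_formula[OF I K] by (rule sums_repr_formula[OF c_sums c_sums[OF w(2)]]) (rule w)
  with sums_unique[OF T] show "(\<lambda>k. hmul (hpow q k) (c k)) sums (\<Sum>n. T n q)" by simp
qed

lemma powser_sums_zero_imp_coeff_zero:
  fixes a :: "nat \<Rightarrow> 'a::{real_normed_field,banach}"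
  assumes R: "R > 0" and sums0: "\<And>x. norm x < R \<Longrightarrow> (\<lambda>n. a n * x ^ n) sums 0"
  shows "a m = 0"
proof (cases "m = 0")
  case True
  have "(\<lambda>n. a n * 0 ^ n) sums a 0"
    using sums_single[of 0 "\<lambda>_. a 0"] by (simp add: power_0_left if_distrib cong: if_cong)
  with sums0[of 0] R True show ?thesis using sums_unique2 by force
next
  case False
  show ?thesis
  proof (rule ccontr)
    assume "a m \<noteq> 0"
    obtain s where s: "0 < s" "\<And>z::'a. z \<in> cball 0 s - {0} \<Longrightarrow> (\<lambda>x. 0::'a) z \<noteq> 0"
      by (rule powser_0_nonzero[where r=R and a=a and \<xi>=0 and f="\<lambda>x. 0" and m=m])
         (use sums0 False \<open>a m \<noteq> 0\<close> R in \<open>auto simp: dist_norm\<close>)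
    obtain z :: 'a where "norm z = s" using vector_choose_size[of s] s(1) by auto
    with s(1) s(2)[of z] show False by auto
  qed
qed

lemma coeffs_unique_on_real_axis:
  assumes "\<And>x. \<bar>x\<bar> < 1 \<Longrightarrow> (\<lambda>n. hmul (hpow (x *\<^sub>R hone) n) (c n)) sums F x"
    and "\<And>x. \<bar>x\<bar> < 1 \<Longrightarrow> (\<lambda>n. hmul (hpow (x *\<^sub>R hone) n) (c' n)) sums F x"
  shows "c = c'"
proof -
  have "(c m - c' m) $ i = 0" for m i
  proof (rule powser_sums_zero_imp_coeff_zero[where R=1])
    fix x :: real assume "norm x < 1"
    then have "(\<lambda>n. x^n *\<^sub>R c n - x^n *\<^sub>R c' n) sums (F x - F x)"
      using sums_diff[OF assms(1)[of x] assms(2)[of x]] by (simp add: hpow_scaleR_hone hmul_scaleR_left)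
    from bounded_linear.sums[OF bounded_linear_vec_nth this, of i]
    show "(\<lambda>n. (c n - c' n) $ i * x ^ n) sums 0" by (simp add: algebra_simps)
  qed simp
  then show ?thesis by (auto simp: vec_eq_iff fun_eq_iff)
qed

lemma scaleR_hone_in_qball_iff: "x *\<^sub>R hone \<in> qball \<longleftrightarrow> \<bar>x\<bar> < 1"
  by (simp add: qball_def norm_vec_def L2_set_def sum_4 hone_def abs_square_less_1)

lemma represents_unique:
  assumes "represents F c" "represents F c'"
  shows "c = c'"
  by (rule coeffs_unique_on_real_axis)
     (use assms in \<open>auto simp: represents_def scaleR_hone_in_qball_iff\<close>)

definition circ :: "real \<Rightarrow> real \<Rightarrow> complex" where
  "circ r t = circlepath 0 r t"

lemma circ_eq: "circ r t = of_real r * exp (2 * of_real pi * \<i> * of_real t)"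
  by (simp add: circ_def circlepath)

lemma norm_circ: "r \<ge> 0 \<Longrightarrow> norm (circ r t) = r"
  by (simp add: circ_eq norm_mult norm_exp_eq_Re)

lemma circ_nonzero: "r > 0 \<Longrightarrow> circ r t \<noteq> 0"
  using norm_circ[of r t] by auto

lemma cnj_circ:
  assumes "r > 0"
  shows "cnj (circ r t) = of_real (r^2) / circ r t"
proof -
  have "cnj (circ r t) * circ r t = of_real ((norm (circ r t))^2)"
    by (simp add: complex_norm_square mult.commute del: of_real_power)
  then show ?thesis using assms circ_nonzero[OF assms, of t] norm_circ[of r t] by (simp add: field_simps)
qed

lemma continuous_on_circ [continuous_intros]: "continuous_on S (circ r)"
  unfolding circ_eq by (intro continuous_intros)

lemma continuous_on_comp_circ:
  assumes "continuous_on (ball 0 R) F" "0 \<le> r" "r < R"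
  shows "continuous_on S (\<lambda>t. F (circ r t))"
  by (rule continuous_on_compose2[OF assms(1) continuous_on_circ]) (use assms in \<open>auto simp: norm_circ\<close>)

lemma has_integral_circ_of_contour:
  assumes "(g has_contour_integral I) (circlepath 0 r)"
  shows "((\<lambda>t. g (circ r t) * circ r t) has_integral I / (2*pi*\<i>)) {0..1}"
proof -
  have "((\<lambda>t. g (circ r t) * vector_derivative (circlepath 0 r) (at t within {0..1})) has_integral I) {0..1}"
    using assms by (simp add: has_contour_integral_def circ_def)
  then have "((\<lambda>t. (2*pi*\<i>) * (g (circ r t) * circ r t)) has_integral I) {0..1}"
    by (rule has_integral_eq[rotated]) (simp add: vector_derivative_circlepath01 circ_eq)
  from has_integral_mult_right[OF this, of "1/(2*pi*\<i>)"] show ?thesis by simp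
qed

lemma Cauchy_coeff_integral:
  assumes hol: "f holomorphic_on ball 0 R" and r: "0 < r" "r < R"
  shows "((\<lambda>t. f (circ r t) / (circ r t)^k) has_integral ((deriv ^^ k) f 0 / fact k)) {0..1}"
proof -
  have "cball 0 r \<subseteq> ball 0 R" using r by auto
  then have "continuous_on (cball 0 r) f" "f holomorphic_on ball 0 r"
    using holomorphic_on_subset[OF hol] holomorphic_on_imp_continuous_on ball_subset_cball by blast+
  then have "((\<lambda>u. f u / (u - 0)^(Suc k)) has_contour_integral ((2*pi*\<i>)/fact k * (deriv^^k) f 0))
      (circlepath 0 r)"
    by (intro Cauchy_has_contour_integral_higher_derivative_circlepath) (use r in auto)
  from has_integral_circ_of_contour[OF this]
  have "((\<lambda>t. f (circ r t) / (circ r t)^k) has_integral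
      (2*pi*\<i>)/fact k * (deriv^^k) f 0 / (2*pi*\<i>)) {0..1}"
    by (rule has_integral_eq[rotated]) (use circ_nonzero[OF r(1)] in \<open>simp add: field_simps\<close>)
  then show ?thesis by simp
qed

lemma mean_value_integral:
  assumes "f holomorphic_on ball 0 R" "0 < r" "r < R"
  shows "((\<lambda>t. f (circ r t)) has_integral f 0) {0..1}"
  using Cauchy_coeff_integral[OF assms, of 0] by simp

lemma Cauchy_integral_circ:
  assumes hol: "f holomorphic_on ball 0 R" and r: "0 < r" "r < R" and w: "norm w < r"
  shows "((\<lambda>t. f (circ r t) * circ r t / (circ r t - w)) has_integral f w) {0..1}"
proof -
  have "cball 0 r \<subseteq> ball 0 R" using r by auto
  then have "continuous_on (cball 0 r) f" "f holomorphic_on ball 0 r"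
    using holomorphic_on_subset[OF hol] holomorphic_on_imp_continuous_on ball_subset_cball by blast+
  then have "((\<lambda>u. f u / (u - w)^(Suc 0)) has_contour_integral ((2*pi*\<i>)/fact 0 * (deriv^^0) f w))
      (circlepath 0 r)"
    by (intro Cauchy_has_contour_integral_higher_derivative_circlepath) (use w in auto)
  from has_integral_circ_of_contour[OF this] show ?thesis by simp
qed

lemma Taylor_coeff_unique:
  assumes hol: "f holomorphic_on ball 0 R" and R: "R > 0"
    and sums: "\<And>z. norm z < R \<Longrightarrow> (\<lambda>n. c n * z ^ n) sums f z"
  shows "(deriv ^^ k) f 0 / fact k = c k"
proof -
  have "(deriv ^^ k) f 0 / fact k - c k = 0"
  proof (rule powser_sums_zero_imp_coeff_zero[OF R])
    fix x :: complex assume x: "norm x < R"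
    have "(\<lambda>n. (deriv ^^ n) f 0 / fact n * (x - 0)^n) sums f x"
      by (rule holomorphic_power_series[OF hol]) (use x in simp)
    from sums_diff[OF this sums[OF x]]
    show "(\<lambda>n. ((deriv ^^ n) f 0 / fact n - c n) * x ^ n) sums 0" by (simp add: algebra_simps)
  qed
  then show ?thesis by simp
qed

lemma Taylor_coeff_poly:
  fixes b :: "nat \<Rightarrow> complex"
  shows "(deriv ^^ k) (\<lambda>z. \<Sum>j\<le>M. b j * z^j) 0 / fact k = (if k \<le> M then b k else 0)"
proof (rule Taylor_coeff_unique[where R=1])
  fix z :: complex
  have "(\<lambda>n. (if n \<le> M then b n else 0) * z ^ n) sums (\<Sum>n\<le>M. (if n \<le> M then b n else 0) * z ^ n)"
    by (rule sums_finite) auto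
  then show "(\<lambda>n. (if n \<le> M then b n else 0) * z ^ n) sums (\<Sum>j\<le>M. b j * z^j)" by simp
qed (intro holomorphic_intros, simp)

lemma has_integral_mult_cnj_poly:
  assumes hol: "A holomorphic_on ball 0 R" and r: "0 < r" "r < R"
  shows "((\<lambda>t. A (circ r t) * cnj (\<Sum>k\<le>M. b k * (circ r t)^k)) has_integral
      (\<Sum>k\<le>M. cnj (b k) * of_real (r^(2*k)) * ((deriv ^^ k) A 0 / fact k))) {0..1}"
proof -
  have "((\<lambda>t. \<Sum>k\<le>M. cnj (b k) * of_real (r^(2*k)) * (A (circ r t) / (circ r t)^k)) has_integral
      (\<Sum>k\<le>M. cnj (b k) * of_real (r^(2*k)) * ((deriv ^^ k) A 0 / fact k))) {0..1}"
    by (intro has_integral_sum has_integral_mult_right Cauchy_coeff_integral[OF hol r]) auto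
  moreover have "A (circ r t) * cnj (\<Sum>k\<le>M. b k * (circ r t)^k) =
      (\<Sum>k\<le>M. cnj (b k) * of_real (r^(2*k)) * (A (circ r t) / (circ r t)^k))" for t
  proof -
    have "cnj ((circ r t)^k) = of_real (r^(2*k)) / (circ r t)^k" for k
      using cnj_circ[OF r(1), of t] by (simp add: power_divide power_mult flip: of_real_power)
    then show ?thesis by (simp add: sum_distrib_left algebra_simps)
  qed
  ultimately show ?thesis by simp
qed

lemma Re_cnj_mult_self: "Re (cnj x * of_real c * x) = (cmod x)^2 * c" "Re (cnj x * x) = (cmod x)^2"
  unfolding cmod_power2 by (simp_all add: power2_eq_square algebra_simps)

lemma Parseval_poly:
  fixes b :: "nat \<Rightarrow> complex"
  shows "((\<lambda>t. (norm (\<Sum>k\<le>M. b k * (circ 1 t)^k))^2) has_integral (\<Sum>k\<le>M. (norm (b k))^2)) {0..1}"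
proof -
  let ?B = "\<lambda>z. \<Sum>j\<le>M. b j * z^j"
  have "?B holomorphic_on ball 0 2" by (intro holomorphic_intros)
  from has_integral_mult_cnj_poly[OF this, where r=1 and M=M and b=b]
  have i: "((\<lambda>t. ?B (circ 1 t) * cnj (?B (circ 1 t))) has_integral (\<Sum>k\<le>M. cnj (b k) * b k)) {0..1}"
    by (simp add: Taylor_coeff_poly)
  have Re_mult_cnj: "Re (x * cnj x) = (cmod x)^2" for x
    by (metis Re_complex_of_real complex_norm_square)
  from has_integral_Re[OF i] show ?thesis
    unfolding Re_mult_cnj Re_sum Re_cnj_mult_self .
qed

text \<open>Integrate \<open>|A|\<^sup>2 \<ge> 2 Re (A cnj B) - |B|\<^sup>2\<close> for the Taylor polynomial \<open>B\<close> of \<open>A\<close>.\<close>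

lemma Bessel_circle:
  assumes hol: "A holomorphic_on ball 0 R" and r: "0 < r" "r < R"
  shows "(\<Sum>k\<le>M. (norm ((deriv ^^ k) A 0 / fact k))^2 * r^(2*k))
    \<le> integral {0..1} (\<lambda>t. (norm (A (circ r t)))^2)"
proof -
  define a where "a k = (deriv ^^ k) A 0 / fact k" for k
  let ?B = "\<lambda>z. \<Sum>j\<le>M. a j * z^j"
  have holB: "?B holomorphic_on ball 0 (r+1)" by (intro holomorphic_intros)
  have i1: "((\<lambda>t. A (circ r t) * cnj (?B (circ r t))) has_integral
      (\<Sum>k\<le>M. cnj (a k) * of_real (r^(2*k)) * a k)) {0..1}"
    using has_integral_mult_cnj_poly[OF hol r, where M=M and b=a] by (simp add: a_def)
  have i2: "((\<lambda>t. ?B (circ r t) * cnj (?B (circ r t))) has_integral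
      (\<Sum>k\<le>M. cnj (a k) * of_real (r^(2*k)) * a k)) {0..1}"
    using has_integral_mult_cnj_poly[OF holB, where r=r and M=M and b=a] r by (simp add: Taylor_coeff_poly)
  have "Re (\<Sum>k\<le>M. cnj (a k) * of_real (r^(2*k)) * a k) = (\<Sum>k\<le>M. (norm (a k))^2 * r^(2*k))"
    unfolding Re_sum Re_cnj_mult_self ..
  then have "((\<lambda>t. 2 * Re (A (circ r t) * cnj (?B (circ r t))) - Re (?B (circ r t) * cnj (?B (circ r t))))
      has_integral (\<Sum>k\<le>M. (norm (a k))^2 * r^(2*k))) {0..1}"
    using has_integral_diff[OF has_integral_mult_right[OF has_integral_Re[OF i1], of 2] has_integral_Re[OF i2]]
    by simp
  moreover have "continuous_on {0..1} (\<lambda>t. (norm (A (circ r t)))^2)"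
    using holomorphic_on_imp_continuous_on[OF hol] r by (intro continuous_intros continuous_on_comp_circ) auto
  then have "((\<lambda>t. (norm (A (circ r t)))^2) has_integral integral {0..1} (\<lambda>t. (norm (A (circ r t)))^2)) {0..1}"
    by (rule integrable_integral[OF integrable_continuous_interval])
  moreover have "2 * Re (x * cnj y) - Re (y * cnj y) \<le> (cmod x)^2" for x y
  proof -
    have "0 \<le> (Re x - Re y)^2 + (Im x - Im y)^2" by simp
    then show ?thesis unfolding cmod_power2 by (simp add: power2_eq_square algebra_simps)
  qed
  ultimately show ?thesis unfolding a_def[symmetric] by (rule has_integral_le)
qed

section \<open>The Poisson kernel and subordination\<close>

definition poisson_kernel :: "complex \<Rightarrow> complex \<Rightarrow> complex" where
  "poisson_kernel z e = e / (e - z) + cnj z * e / (1 - cnj z * e)"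

lemma poisson_kernel_denoms_nonzero:
  assumes "norm z < 1" "norm e = 1"
  shows "e - z \<noteq> 0" "1 - cnj z * e \<noteq> 0"
proof -
  show "e - z \<noteq> 0" using assms by auto
  have "norm (cnj z * e) < 1" using assms by (simp add: norm_mult)
  then show "1 - cnj z * e \<noteq> 0" by auto
qed

lemma continuous_on_poisson_kernel:
  assumes "continuous_on S Z" "continuous_on S E" "\<And>x. x \<in> S \<Longrightarrow> norm (Z x) < 1 \<and> norm (E x) = 1"
  shows "continuous_on S (\<lambda>x. poisson_kernel (Z x) (E x))"
  unfolding poisson_kernel_def using assms poisson_kernel_denoms_nonzero by (intro continuous_intros) auto

lemma poisson_kernel_eq:
  assumes z: "norm z < 1" and e: "norm e = 1"
  shows "poisson_kernel z e = of_real ((1 - (norm z)^2) / (norm (e - z))^2)"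
proof -
  note nz = poisson_kernel_denoms_nonzero[OF z e]
  have ee: "cnj e * e = 1" using e by (metis complex_norm_square mult.commute of_real_1 power_one)
  have "1 - cnj z * e = e * cnj (e - z)" using ee by (simp add: algebra_simps)
  moreover have "e \<noteq> 0" "cnj (e - z) \<noteq> 0" using e nz by auto
  ultimately have "poisson_kernel z e = e / (e - z) + cnj z / cnj (e - z)"
    by (simp add: poisson_kernel_def)
  also have "\<dots> = (e * cnj (e - z) + cnj z * (e - z)) / ((e - z) * cnj (e - z))"
    using nz by (simp add: field_simps)
  also have "e * cnj (e - z) + cnj z * (e - z) = 1 - z * cnj z"
    using ee by (simp add: algebra_simps)
  also have "(e - z) * cnj (e - z) = of_real ((norm (e - z))^2)" by (metis complex_norm_square)
  also have "1 - z * cnj z = of_real (1 - (norm z)^2)"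
    by (simp add: complex_norm_square[symmetric] del: of_real_power)
  finally show ?thesis by simp
qed

lemma poisson_kernel_bounds:
  assumes z: "norm z < 1" and e: "norm e = 1"
  shows "Re (poisson_kernel z e) \<le> (1 + norm z) / (1 - norm z)" "Re (poisson_kernel z e) \<ge> 0"
    "Im (poisson_kernel z e) = 0"
proof -
  have d: "norm (e - z) \<ge> 1 - norm z" using e norm_triangle_ineq2[of e z] by simp
  have p: "1 - norm z > 0" using z by simp
  have "(1 - (norm z)^2) / (norm (e - z))^2 \<le> (1 - (norm z)^2) / (1 - norm z)^2"
    by (rule divide_left_mono)
       (use d p z in \<open>auto intro!: power_mono mult_pos_pos power_le_one simp: abs_square_less_1\<close>)
  also have "\<dots> = ((1 + norm z) * (1 - norm z)) / ((1 - norm z) * (1 - norm z))"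
    by (simp add: power2_eq_square algebra_simps)
  also have "\<dots> = (1 + norm z) / (1 - norm z)" using p by simp
  finally show "Re (poisson_kernel z e) \<le> (1 + norm z) / (1 - norm z)"
    using poisson_kernel_eq[OF z e] by simp
  have "(norm z)^2 \<le> 1" using z by (simp add: power_le_one)
  then show "Re (poisson_kernel z e) \<ge> 0" using poisson_kernel_eq[OF z e] by (simp del: of_real_power)
  show "Im (poisson_kernel z e) = 0" using poisson_kernel_eq[OF z e] by simp
qed

text \<open>The first summand of the kernel gives Cauchy's formula; the second one integrates to zero because \<open>F(u) cnj z u / (1 - cnj z u)\<close> is holomorphic near the closed disc
  and vanishes at \<open>0\<close>.\<close>

lemma Poisson_integral:
  assumes hol: "F holomorphic_on ball 0 R" and R: "R > 1" and z: "norm z < 1"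
  shows "((\<lambda>s. F (circ 1 s) * poisson_kernel z (circ 1 s)) has_integral F z) {0..1}"
proof -
  define R2 where "R2 = (if z = 0 then R else min R (1 / norm z))"
  have R2: "R2 > 1" using R z by (auto simp: R2_def field_simps)
  have nz: "1 - cnj z * u \<noteq> 0" if "u \<in> ball 0 R2" for u
  proof (cases "z = 0")
    case False
    then have "norm u < 1 / norm z" using that by (simp add: R2_def)
    then have "norm (cnj z * u) < 1" using False by (simp add: norm_mult field_simps)
    then show ?thesis by auto
  qed simp
  have "ball 0 R2 \<subseteq> ball 0 R" by (auto simp: R2_def)
  then have "(\<lambda>u. F u * (cnj z * u / (1 - cnj z * u))) holomorphic_on ball 0 R2"
    using nz holomorphic_on_subset[OF hol] by (intro holomorphic_intros) auto
  from mean_value_integral[OF this, of 1] R2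
  have i2: "((\<lambda>s. F (circ 1 s) * (cnj z * circ 1 s / (1 - cnj z * circ 1 s))) has_integral 0) {0..1}"
    by simp
  have i1: "((\<lambda>s. F (circ 1 s) * circ 1 s / (circ 1 s - z)) has_integral F z) {0..1}"
    by (rule Cauchy_integral_circ[OF hol]) (use R z in auto)
  from has_integral_add[OF i1 i2] show ?thesis
    by (simp add: poisson_kernel_def algebra_simps)
qed

lemma Poisson_integral_one:
  "norm z < 1 \<Longrightarrow> ((\<lambda>s. poisson_kernel z (circ 1 s)) has_integral 1) {0..1}"
  using Poisson_integral[of "\<lambda>_. 1" 2 z] by simp

text \<open>The least harmonic majorant of \<open>|F|\<^sup>2\<close> on the disc.\<close>

definition poisson_majorant :: "(complex \<Rightarrow> complex) \<Rightarrow> complex \<Rightarrow> real" where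
  "poisson_majorant F z = integral {0..1} (\<lambda>s. (norm (F (circ 1 s)))^2 * Re (poisson_kernel z (circ 1 s)))"

lemma has_integral_poisson_majorant:
  assumes "continuous_on (ball 0 R) F" "R > 1" "norm z < 1"
  shows "((\<lambda>s. (norm (F (circ 1 s)))^2 * Re (poisson_kernel z (circ 1 s))) has_integral
    poisson_majorant F z) {0..1}"
proof -
  have "continuous_on {0..1} (\<lambda>s. poisson_kernel z (circ 1 s))"
    by (rule continuous_on_poisson_kernel[OF continuous_on_const continuous_on_circ])
       (simp add: assms norm_circ)
  moreover have "continuous_on {0..1} (\<lambda>s. F (circ 1 s))"
    by (rule continuous_on_comp_circ[OF assms(1)]) (use assms in auto)
  ultimately have "continuous_on {0..1} (\<lambda>s. (norm (F (circ 1 s)))^2 * Re (poisson_kernel z (circ 1 s)))"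
    by (intro continuous_intros)
  then show ?thesis unfolding poisson_majorant_def
    by (rule integrable_integral[OF integrable_continuous_interval])
qed

text \<open>Integrating \<open>P(z,e) |F(e) - F(z)|\<^sup>2 \<ge> 0\<close> and using the Poisson formula twice.\<close>

lemma norm_sq_le_poisson_majorant:
  assumes hol: "F holomorphic_on ball 0 R" and R: "R > 1" and z: "norm z < 1"
  shows "(norm (F z))^2 \<le> poisson_majorant F z"
proof -
  define c where "c = F z"
  let ?P = "\<lambda>s. poisson_kernel z (circ 1 s)"
  have iF: "((\<lambda>s. (norm (F (circ 1 s)))^2 * Re (?P s)) has_integral poisson_majorant F z) {0..1}"
    using has_integral_poisson_majorant holomorphic_on_imp_continuous_on[OF hol] R z by blast
  have i1: "((\<lambda>s. Re (cnj c * (F (circ 1 s) * ?P s))) has_integral (norm c)^2) {0..1}"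
    using has_integral_Re[OF has_integral_mult_right[OF Poisson_integral[OF hol R z], of "cnj c"]]
    unfolding c_def[symmetric] Re_cnj_mult_self(2) .
  have i0: "((\<lambda>s. Re (?P s) * (norm c)^2) has_integral (norm c)^2) {0..1}"
    using has_integral_mult_left[OF has_integral_Re[OF Poisson_integral_one[OF z]], of "(norm c)^2"]
    by simp
  have "((\<lambda>s. (norm (F (circ 1 s)))^2 * Re (?P s) - 2 * Re (cnj c * (F (circ 1 s) * ?P s))
      + Re (?P s) * (norm c)^2) has_integral poisson_majorant F z - 2 * (norm c)^2 + (norm c)^2) {0..1}"
    using has_integral_add[OF has_integral_diff[OF iF has_integral_mult_right[OF i1, of 2]] i0] by simp
  then have "0 \<le> poisson_majorant F z - 2 * (norm c)^2 + (norm c)^2"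
  proof (rule has_integral_nonneg)
    fix s :: real
    let ?e = "circ 1 s"
    have e1: "norm ?e = 1" by (simp add: norm_circ)
    have eq: "Re (cnj c * (F ?e * ?P s)) = Re (?P s) * Re (cnj c * F ?e)"
      using poisson_kernel_bounds(3)[OF z e1] by (simp add: algebra_simps)
    have norm_diff_sq: "(cmod (x - c))^2 = (cmod x)^2 - 2 * Re (cnj c * x) + (cmod c)^2" for x
      unfolding cmod_power2 by (simp add: power2_eq_square algebra_simps)
    have "(norm (F ?e))^2 * Re (?P s) - 2 * Re (cnj c * (F ?e * ?P s)) + Re (?P s) * (norm c)^2
       = Re (?P s) * (norm (F ?e - c))^2"
      unfolding norm_diff_sq eq by (simp add: algebra_simps)
    also have "\<dots> \<ge> 0" using poisson_kernel_bounds(2)[OF z e1] by simp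
    finally show "0 \<le> (norm (F ?e))^2 * Re (?P s) - 2 * Re (cnj c * (F ?e * ?P s)) + Re (?P s) * (norm c)^2" .
  qed
  then show ?thesis by (simp add: c_def)
qed

text \<open>\<open>P(\<phi>(z), e)\<close> is the real part of a holomorphic function of \<open>z\<close>, hence has the mean value
  property on circles.\<close>

lemma poisson_kernel_comp_mean:
  assumes hol: "\<phi> holomorphic_on ball 0 1" and \<phi>: "\<And>z. norm z < 1 \<Longrightarrow> norm (\<phi> z) < 1"
    and r: "0 < r" "r < 1" and e: "norm e = 1"
  shows "((\<lambda>t. poisson_kernel (\<phi> (circ r t)) e) has_integral poisson_kernel (\<phi> 0) e) {0..1}"
proof -
  have "e - \<phi> u \<noteq> 0" "1 - \<phi> u * cnj e \<noteq> 0" if "u \<in> ball 0 1" for u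
  proof -
    show "e - \<phi> u \<noteq> 0" using poisson_kernel_denoms_nonzero(1)[OF \<phi> e] that by simp
    have "norm (\<phi> u * cnj e) < 1" using \<phi>[of u] that e by (simp add: norm_mult)
    then show "1 - \<phi> u * cnj e \<noteq> 0" by auto
  qed
  then have "(\<lambda>u. e / (e - \<phi> u)) holomorphic_on ball 0 1"
    "(\<lambda>u. \<phi> u * cnj e / (1 - \<phi> u * cnj e)) holomorphic_on ball 0 1"
    using hol by (auto intro!: holomorphic_intros)
  from this[THEN mean_value_integral, OF r]
  have i1: "((\<lambda>t. e / (e - \<phi> (circ r t))) has_integral e / (e - \<phi> 0)) {0..1}"
    and i2: "((\<lambda>t. \<phi> (circ r t) * cnj e / (1 - \<phi> (circ r t) * cnj e)) has_integral
      \<phi> 0 * cnj e / (1 - \<phi> 0 * cnj e)) {0..1}"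
    by simp_all
  have "((\<lambda>t. cnj (\<phi> (circ r t)) * e / (1 - cnj (\<phi> (circ r t)) * e)) has_integral
      cnj (\<phi> 0) * e / (1 - cnj (\<phi> 0) * e)) {0..1}"
    using iffD2[OF has_integral_cnj i2] by (simp add: o_def)
  with i1 show ?thesis unfolding poisson_kernel_def by (rule has_integral_add)
qed

lemma poisson_majorant_comp_mean:
  assumes hol: "F holomorphic_on ball 0 R" and R: "R > 1"
    and hol_\<phi>: "\<phi> holomorphic_on ball 0 1" and \<phi>: "\<And>z. norm z < 1 \<Longrightarrow> norm (\<phi> z) < 1"
    and r: "0 < r" "r < 1"
  shows "((\<lambda>t. poisson_majorant F (\<phi> (circ r t))) has_integral poisson_majorant F (\<phi> 0)) {0..1}"
proof -
  define G where "G t s = (norm (F (circ 1 s)))^2 * Re (poisson_kernel (\<phi> (circ r t)) (circ 1 s))" for t s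
  have c\<phi>: "continuous_on UNIV (\<lambda>x::real\<times>real. \<phi> (circ r (fst x)))"
    using r holomorphic_on_imp_continuous_on[OF hol_\<phi>]
    by (intro continuous_on_compose2[OF _ continuous_on_compose2[OF continuous_on_circ continuous_on_fst]])
       (auto simp: norm_circ)
  have ce: "continuous_on UNIV (\<lambda>x::real\<times>real. circ 1 (snd x))"
    by (rule continuous_on_compose2[OF continuous_on_circ continuous_on_snd]) auto
  have cF: "continuous_on UNIV (\<lambda>x::real\<times>real. F (circ 1 (snd x)))"
    using holomorphic_on_imp_continuous_on[OF hol] R
    by (intro continuous_on_compose2[OF _ ce]) (auto simp: norm_circ)
  have "continuous_on UNIV (\<lambda>x::real\<times>real. poisson_kernel (\<phi> (circ r (fst x))) (circ 1 (snd x)))"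
    using r by (intro continuous_on_poisson_kernel[OF c\<phi> ce]) (auto intro!: \<phi> simp: norm_circ)
  with cF have "continuous_on UNIV (\<lambda>x. G (fst x) (snd x))"
    unfolding G_def by (intro continuous_intros)
  then have cG: "continuous_on S (\<lambda>(t, s). G t s)" for S
    using continuous_on_subset[of UNIV] by (simp add: case_prod_beta)
  have inner: "integral {0..1} (\<lambda>t. G t s) = (norm (F (circ 1 s)))^2 * Re (poisson_kernel (\<phi> 0) (circ 1 s))"
    for s
  proof -
    have "((\<lambda>t. poisson_kernel (\<phi> (circ r t)) (circ 1 s)) has_integral poisson_kernel (\<phi> 0) (circ 1 s)) {0..1}"
      by (rule poisson_kernel_comp_mean[OF hol_\<phi> \<phi> r]) (simp_all add: norm_circ)
    from has_integral_mult_left[OF has_integral_Re[OF this], of "(norm (F (circ 1 s)))^2"]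
    have "((\<lambda>t. G t s) has_integral (norm (F (circ 1 s)))^2 * Re (poisson_kernel (\<phi> 0) (circ 1 s))) {0..1}"
      unfolding G_def by (simp add: mult.commute)
    then show ?thesis by (rule integral_unique)
  qed
  have "continuous_on {0..1} (\<lambda>t. integral (cbox 0 1) (G t))"
    by (rule integral_continuous_on_param[OF cG])
  then have "((\<lambda>t. integral {0..1} (G t)) has_integral integral {0..1} (\<lambda>t. integral {0..1} (G t))) {0..1}"
    unfolding cbox_interval by (rule integrable_integral[OF integrable_continuous_interval])
  moreover have "integral {0..1} (\<lambda>t. integral {0..1} (G t)) = integral {0..1} (\<lambda>s. integral {0..1} (\<lambda>t. G t s))"
    using integral_swap_continuous[OF cG] by (simp add: cbox_interval)
  ultimately show ?thesis unfolding inner by (simp add: G_def[abs_def] poisson_majorant_def)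
qed

text \<open>Littlewood's subordination principle for polynomials \<open>F\<close>: chaining Bessel's inequality on
  the circle of radius \<open>r\<close>, the majorant \<open>|F|\<^sup>2 \<le> U\<close>, the mean value property of \<open>U \<circ> \<phi>\<close>, Harnack's
  inequality at \<open>\<phi>(0)\<close>, and Parseval on the unit circle.\<close>

lemma Taylor_coeffs_comp_poly_le:
  fixes \<alpha> :: "nat \<Rightarrow> complex"
  assumes hol_\<phi>: "\<phi> holomorphic_on ball 0 1" and \<phi>: "\<And>z. norm z < 1 \<Longrightarrow> norm (\<phi> z) < 1"
    and r: "0 < r" "r < 1"
  shows "(\<Sum>k\<le>M. (norm ((deriv ^^ k) (\<lambda>z. \<Sum>n\<le>N. \<alpha> n * (\<phi> z)^n) 0 / fact k))^2 * r^(2*k))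
     \<le> (1 + norm (\<phi> 0)) / (1 - norm (\<phi> 0)) * (\<Sum>n\<le>N. (norm (\<alpha> n))^2)"
proof -
  define F where "F u = (\<Sum>n\<le>N. \<alpha> n * u^n)" for u
  define K where "K = (1 + norm (\<phi> 0)) / (1 - norm (\<phi> 0))"
  have hol_F: "F holomorphic_on ball 0 2" unfolding F_def by (intro holomorphic_intros)
  have hol_F\<phi>: "(\<lambda>z. F (\<phi> z)) holomorphic_on ball 0 1"
    using holomorphic_on_compose_gen[OF hol_\<phi> holomorphic_on_subset[OF hol_F], of "ball 0 1"] \<phi>
    by (auto simp: o_def image_subset_iff subset_ball)
  have \<phi>0: "norm (\<phi> 0) < 1" using \<phi>[of 0] by simp
  have \<phi>_circ: "norm (\<phi> (circ r t)) < 1" for t using \<phi> r by (simp add: norm_circ)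
  have U_mean: "((\<lambda>t. poisson_majorant F (\<phi> (circ r t))) has_integral poisson_majorant F (\<phi> 0)) {0..1}"
    by (rule poisson_majorant_comp_mean[OF hol_F _ hol_\<phi> \<phi> r]) simp
  have "(\<Sum>k\<le>M. (norm ((deriv ^^ k) (\<lambda>z. F (\<phi> z)) 0 / fact k))^2 * r^(2*k))
      \<le> integral {0..1} (\<lambda>t. (norm (F (\<phi> (circ r t))))^2)"
    using Bessel_circle[OF hol_F\<phi> r] by simp
  also have "\<dots> \<le> integral {0..1} (\<lambda>t. poisson_majorant F (\<phi> (circ r t)))"
  proof (rule integral_le)
    show "(\<lambda>t. (norm (F (\<phi> (circ r t))))^2) integrable_on {0..1}"
      using holomorphic_on_imp_continuous_on[OF hol_F\<phi>] r
      by (intro integrable_continuous_interval continuous_intros continuous_on_comp_circ) auto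
    show "(\<lambda>t. poisson_majorant F (\<phi> (circ r t))) integrable_on {0..1}" using U_mean by blast
    show "(norm (F (\<phi> (circ r t))))^2 \<le> poisson_majorant F (\<phi> (circ r t))" for t
      by (rule norm_sq_le_poisson_majorant[OF hol_F _ \<phi>_circ]) simp
  qed
  also have "\<dots> = poisson_majorant F (\<phi> 0)" using U_mean by (rule integral_unique)
  also have "\<dots> \<le> K * (\<Sum>n\<le>N. (norm (\<alpha> n))^2)"
  proof (rule has_integral_le)
    show "((\<lambda>s. (norm (F (circ 1 s)))^2 * Re (poisson_kernel (\<phi> 0) (circ 1 s))) has_integral
        poisson_majorant F (\<phi> 0)) {0..1}"
      by (rule has_integral_poisson_majorant[OF holomorphic_on_imp_continuous_on[OF hol_F] _ \<phi>0]) simp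
    show "((\<lambda>s. K * (norm (F (circ 1 s)))^2) has_integral K * (\<Sum>n\<le>N. (norm (\<alpha> n))^2)) {0..1}"
      unfolding F_def by (rule has_integral_mult_right[OF Parseval_poly])
    show "(norm (F (circ 1 s)))^2 * Re (poisson_kernel (\<phi> 0) (circ 1 s)) \<le> K * (norm (F (circ 1 s)))^2"
      for s using mult_right_mono[OF poisson_kernel_bounds(1)[OF \<phi>0], of "circ 1 s" "(norm (F (circ 1 s)))^2"]
      by (simp add: K_def norm_circ mult.commute)
  qed
  finally show ?thesis unfolding K_def F_def .
qed

section \<open>Composition with a self-map of the disc on \<open>H\<^sup>2\<close>\<close>

lemma summable_norm_powser_of_sq:
  fixes \<alpha> :: "nat \<Rightarrow> 'a::real_normed_div_algebra"
  assumes sq: "summable (\<lambda>n. (norm (\<alpha> n))^2)" and u: "norm u < 1"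
  shows "summable (\<lambda>n. norm (\<alpha> n * u^n))"
proof (rule summable_comparison_test[OF _ summable_add[OF summable_geometric[of "norm u"] sq]])
  show "\<exists>N. \<forall>n\<ge>N. norm (norm (\<alpha> n * u ^ n)) \<le> norm u ^ n + (norm (\<alpha> n))^2"
  proof (intro exI allI impI)
    fix n :: nat
    define a p where "a = norm (\<alpha> n)" and "p = norm u ^ n"
    have p: "p \<ge> 0" "p \<le> 1" using u by (auto simp: p_def power_le_one)
    have "a \<le> 1 + a^2"
    proof (cases "a \<le> 1")
      case False then have "a \<le> a * a" by (simp add: mult_le_cancel_left1)
      then show ?thesis by (simp add: power2_eq_square)
    qed (use zero_le_power2[of a] in linarith)
    then have "a * p \<le> (1 + a^2) * p" using p(1) by (rule mult_right_mono)
    also have "\<dots> \<le> p + a^2" using p by (simp add: algebra_simps mult_left_le_one_le)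
    finally have "a * p \<le> p + a^2" .
    then show "norm (norm (\<alpha> n * u ^ n)) \<le> norm u ^ n + (norm (\<alpha> n))^2"
      by (simp add: a_def p_def norm_mult norm_power)
  qed
qed (use u in simp)

lemma fps_conv_radius_ge_1I:
  fixes c :: "nat \<Rightarrow> complex"
  assumes "\<And>z. norm z < 1 \<Longrightarrow> summable (\<lambda>n. c n * z^n)"
  shows "fps_conv_radius (Abs_fps c) \<ge> 1"
proof -
  have "conv_radius c \<ge> 1"
    by (rule conv_radius_geI_ex') (intro assms, simp)
  then show ?thesis by (simp add: fps_conv_radius_def)
qed

lemma holomorphic_on_powser:
  fixes c :: "nat \<Rightarrow> complex"
  assumes "\<And>z. norm z < 1 \<Longrightarrow> summable (\<lambda>n. c n * z^n)"
  shows "(\<lambda>u. \<Sum>n. c n * u^n) holomorphic_on ball 0 1"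
proof -
  have "ball (0::complex) 1 \<subseteq> eball 0 (fps_conv_radius (Abs_fps c))"
  proof
    fix x :: complex assume "x \<in> ball 0 1"
    then have "ereal (dist 0 x) < 1" by simp
    from less_le_trans[OF this fps_conv_radius_ge_1I[OF assms]]
    show "x \<in> eball 0 (fps_conv_radius (Abs_fps c))" by simp
  qed
  then have "eval_fps (Abs_fps c) holomorphic_on ball 0 1" by (rule holomorphic_on_eval_fps)
  moreover have "eval_fps (Abs_fps c) = (\<lambda>u. \<Sum>n. c n * u^n)" by (simp add: fun_eq_iff eval_fps_def)
  ultimately show ?thesis by simp
qed

lemma summable_powser_of_sq:
  fixes \<alpha> :: "nat \<Rightarrow> complex"
  assumes "summable (\<lambda>n. (norm (\<alpha> n))^2)" "norm u < 1"
  shows "summable (\<lambda>n. \<alpha> n * u^n)"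
  by (rule summable_norm_cancel[OF summable_norm_powser_of_sq[OF assms]])

lemma holomorphic_on_comp_powser_of_sq:
  fixes \<alpha> :: "nat \<Rightarrow> complex"
  assumes hol_\<phi>: "\<phi> holomorphic_on ball 0 1" and \<phi>: "\<And>z. norm z < 1 \<Longrightarrow> norm (\<phi> z) < 1"
    and sq: "summable (\<lambda>n. (norm (\<alpha> n))^2)"
  shows "(\<lambda>z. \<Sum>n. \<alpha> n * (\<phi> z)^n) holomorphic_on ball 0 1"
  using holomorphic_on_compose_gen[OF hol_\<phi> holomorphic_on_powser[OF summable_powser_of_sq[OF sq]]] \<phi>
  by (auto simp: o_def image_subset_iff)

lemma norm_powser_tail_le:
  fixes \<alpha> :: "nat \<Rightarrow> complex"
  assumes sq: "summable (\<lambda>n. (norm (\<alpha> n))^2)" and u: "norm u \<le> \<rho>" and \<rho>: "\<rho> < 1"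
  shows "norm ((\<Sum>n. \<alpha> n * u^n) - (\<Sum>n\<le>N. \<alpha> n * u^n))
     \<le> (\<Sum>n. norm (\<alpha> n) * \<rho>^n) - (\<Sum>n<Suc N. norm (\<alpha> n) * \<rho>^n)"
proof -
  have \<rho>0: "\<rho> \<ge> 0" using u norm_ge_zero order_trans by blast
  have su: "summable (\<lambda>n. norm (\<alpha> n * u^n))" using summable_norm_powser_of_sq[OF sq] u \<rho> by simp
  have "summable (\<lambda>n. norm (\<alpha> n * of_real \<rho> ^n))" using summable_norm_powser_of_sq[OF sq] \<rho>0 \<rho> by simp
  then have sr: "summable (\<lambda>n. norm (\<alpha> n) * \<rho>^n)" using \<rho>0 by (simp add: norm_mult norm_power)
  have "(\<Sum>n. \<alpha> n * u^n) - (\<Sum>n\<le>N. \<alpha> n * u^n) = (\<Sum>k. \<alpha> (k + Suc N) * u^(k + Suc N))"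
    using suminf_split_initial_segment[OF summable_norm_cancel[OF su], of "Suc N"]
    by (simp add: lessThan_Suc_atMost)
  moreover have "(\<Sum>n. norm (\<alpha> n) * \<rho>^n) - (\<Sum>n<Suc N. norm (\<alpha> n) * \<rho>^n) =
      (\<Sum>k. norm (\<alpha> (k + Suc N)) * \<rho>^(k + Suc N))"
    using suminf_split_initial_segment[OF sr, of "Suc N"] by simp
  moreover have "norm (\<Sum>k. \<alpha> (k + Suc N) * u^(k + Suc N)) \<le> (\<Sum>k. norm (\<alpha> (k + Suc N)) * \<rho>^(k + Suc N))"
  proof (rule order_trans[OF summable_norm suminf_le])
    show "summable (\<lambda>k. norm (\<alpha> (k + Suc N) * u^(k + Suc N)))"
      using su by (rule summable_ignore_initial_segment)
    then show "summable (\<lambda>k. norm (\<alpha> (k + Suc N) * u^(k + Suc N)))" .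
    show "summable (\<lambda>k. norm (\<alpha> (k + Suc N)) * \<rho>^(k + Suc N))"
      using sr by (rule summable_ignore_initial_segment)
    show "norm (\<alpha> (k + Suc N) * u^(k + Suc N)) \<le> norm (\<alpha> (k + Suc N)) * \<rho>^(k + Suc N)" for k
      using u by (auto simp: norm_mult norm_power intro!: mult_left_mono power_mono simp del: power_Suc)
  qed
  ultimately show ?thesis by simp
qed

lemma powser_tail_tendsto_0:
  fixes \<alpha> :: "nat \<Rightarrow> complex"
  assumes sq: "summable (\<lambda>n. (norm (\<alpha> n))^2)" and \<rho>: "0 \<le> \<rho>" "\<rho> < 1"
  shows "(\<lambda>N. (\<Sum>n. norm (\<alpha> n) * \<rho>^n) - (\<Sum>n<Suc N. norm (\<alpha> n) * \<rho>^n)) \<longlonglongrightarrow> 0"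
proof -
  have "summable (\<lambda>n. norm (\<alpha> n * of_real \<rho> ^n))" using summable_norm_powser_of_sq[OF sq] \<rho> by simp
  then have "summable (\<lambda>n. norm (\<alpha> n) * \<rho>^n)" using \<rho> by (simp add: norm_mult norm_power)
  from LIMSEQ_Suc[OF summable_LIMSEQ[OF this]]
  have "(\<lambda>N. (\<Sum>n<Suc N. norm (\<alpha> n) * \<rho>^n)) \<longlonglongrightarrow> (\<Sum>n. norm (\<alpha> n) * \<rho>^n)" .
  from tendsto_diff[OF tendsto_const this, of "\<Sum>n. norm (\<alpha> n) * \<rho>^n"] show ?thesis
    by (simp del: sum.lessThan_Suc)
qed

text \<open>On the circle of radius \<open>1/2\<close> the partial sums converge uniformly, since \<open>|\<phi>|\<close> attains a
  maximum \<open>\<rho> < 1\<close> there.\<close>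

lemma Taylor_coeffs_comp_partial_sums_tendsto:
  fixes \<alpha> :: "nat \<Rightarrow> complex"
  assumes hol_\<phi>: "\<phi> holomorphic_on ball 0 1" and \<phi>: "\<And>z. norm z < 1 \<Longrightarrow> norm (\<phi> z) < 1"
    and sq: "summable (\<lambda>n. (norm (\<alpha> n))^2)"
  shows "(\<lambda>N. (deriv^^k) (\<lambda>z. \<Sum>n\<le>N. \<alpha> n * (\<phi> z)^n) 0 / fact k)
    \<longlonglongrightarrow> (deriv^^k) (\<lambda>z. \<Sum>n. \<alpha> n * (\<phi> z)^n) 0 / fact k"
proof -
  define G where "G z = (\<Sum>n. \<alpha> n * (\<phi> z)^n)" for z
  define G\<^sub>N where "G\<^sub>N N z = (\<Sum>n\<le>N. \<alpha> n * (\<phi> z)^n)" for N z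
  define a a\<^sub>N where "a = (deriv^^k) G 0 / fact k" and "a\<^sub>N N = (deriv^^k) (G\<^sub>N N) 0 / fact k" for N
  let ?c = "circ (1/2)"
  have cont: "continuous_on {0..1} (\<lambda>t. norm (\<phi> (?c t)))"
    using holomorphic_on_imp_continuous_on[OF hol_\<phi>] by (intro continuous_intros continuous_on_comp_circ) auto
  obtain t\<^sub>0 where t\<^sub>0: "\<forall>t\<in>{0..1}. norm (\<phi> (?c t)) \<le> norm (\<phi> (?c t\<^sub>0))"
    using continuous_attains_sup[OF compact_Icc _ cont] by auto
  define \<rho> where "\<rho> = norm (\<phi> (?c t\<^sub>0))"
  have \<rho>: "0 \<le> \<rho>" "\<rho> < 1" unfolding \<rho>_def using \<phi> by (simp_all add: norm_circ)
  define T where "T N = (\<Sum>n. norm (\<alpha> n) * \<rho>^n) - (\<Sum>n<Suc N. norm (\<alpha> n) * \<rho>^n)" for N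
  have bound: "norm (a\<^sub>N N - a) \<le> T N * 2^k" for N
  proof -
    have "norm (a\<^sub>N N - a) \<le> T N * 2^k * Henstock_Kurzweil_Integration.content (cbox (0::real) 1)"
    proof (rule has_integral_bound)
      have "G\<^sub>N N holomorphic_on ball 0 1" unfolding G\<^sub>N_def using hol_\<phi> by (intro holomorphic_intros)
      moreover have "G holomorphic_on ball 0 1"
        unfolding G_def by (rule holomorphic_on_comp_powser_of_sq[OF hol_\<phi> \<phi> sq])
      ultimately show "((\<lambda>t. G\<^sub>N N (?c t) / (?c t)^k - G (?c t) / (?c t)^k) has_integral (a\<^sub>N N - a)) (cbox 0 1)"
        unfolding a_def a\<^sub>N_def cbox_interval
        by (intro has_integral_diff Cauchy_coeff_integral) auto
      show "0 \<le> T N * 2^k"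
        using norm_powser_tail_le[OF sq _ \<rho>(2), of 0 N] \<rho>(1) unfolding T_def by simp
      fix t :: real assume "t \<in> cbox 0 1"
      then have "norm (\<phi> (?c t)) \<le> \<rho>" using t\<^sub>0 by (simp add: \<rho>_def)
      from norm_powser_tail_le[OF sq this \<rho>(2), of N]
      show "norm (G\<^sub>N N (?c t) / (?c t)^k - G (?c t) / (?c t)^k) \<le> T N * 2^k"
        by (simp add: T_def G_def G\<^sub>N_def diff_divide_distrib[symmetric] norm_divide norm_power norm_circ
            norm_minus_commute power_one_over)
    qed
    then show ?thesis by simp
  qed
  have "(\<lambda>N. a\<^sub>N N - a) \<longlonglongrightarrow> 0"
  proof (rule Lim_null_comparison[OF always_eventually])
    show "\<forall>N. norm (a\<^sub>N N - a) \<le> T N * 2^k" using bound by blast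
    show "(\<lambda>N. T N * 2^k) \<longlonglongrightarrow> 0"
      using tendsto_mult_left_zero[OF powser_tail_tendsto_0[OF sq \<rho>]] by (simp add: T_def)
  qed
  from tendsto_add[OF this tendsto_const[of a]] show ?thesis by (simp add: a_def a\<^sub>N_def G_def[abs_def] G\<^sub>N_def[abs_def])
qed

lemma sum_le_of_weighted_sums_le:
  fixes x :: "nat \<Rightarrow> real"
  assumes "\<And>r. 0 < r \<Longrightarrow> r < 1 \<Longrightarrow> (\<Sum>k\<le>M. x k * r^(2*k)) \<le> C"
  shows "(\<Sum>k\<le>M. x k) \<le> C"
proof -
  define r where "r j = 1 - inverse (real (Suc (Suc j)))" for j
  have r: "0 < r j" "r j < 1" for j by (auto simp: r_def field_simps)
  have "r \<longlonglongrightarrow> 1"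
    using tendsto_diff[OF tendsto_const LIMSEQ_Suc[OF LIMSEQ_inverse_real_of_nat], of 1]
    by (simp add: r_def[abs_def])
  then have "(\<lambda>j. \<Sum>k\<le>M. x k * r j^(2*k)) \<longlonglongrightarrow> (\<Sum>k\<le>M. x k * 1^(2*k))"
    by (intro tendsto_intros)
  then have "(\<Sum>k\<le>M. x k * 1^(2*k)) \<le> C"
    by (rule LIMSEQ_le_const2) (use assms[OF r] in auto)
  then show ?thesis by simp
qed

theorem composition_H2_bound:
  fixes \<alpha> :: "nat \<Rightarrow> complex"
  assumes hol_\<phi>: "\<phi> holomorphic_on ball 0 1" and \<phi>: "\<And>z. norm z < 1 \<Longrightarrow> norm (\<phi> z) < 1"
    and sq: "summable (\<lambda>n. (norm (\<alpha> n))^2)"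
  defines "a \<equiv> \<lambda>k. (deriv^^k) (\<lambda>z. \<Sum>n. \<alpha> n * (\<phi> z)^n) 0 / fact k"
  shows "summable (\<lambda>k. (norm (a k))^2)"
    and "(\<Sum>k. (norm (a k))^2) \<le> (1 + norm (\<phi> 0)) / (1 - norm (\<phi> 0)) * (\<Sum>n. (norm (\<alpha> n))^2)"
proof -
  define K where "K = (1 + norm (\<phi> 0)) / (1 - norm (\<phi> 0))"
  define S where "S = (\<Sum>n. (norm (\<alpha> n))^2)"
  define a\<^sub>N where "a\<^sub>N N k = (deriv^^k) (\<lambda>z. \<Sum>n\<le>N. \<alpha> n * (\<phi> z)^n) 0 / fact k" for N k
  have "K \<ge> 0" unfolding K_def using \<phi>[of 0] by simp
  have partial: "(\<Sum>k\<le>M. (norm (a\<^sub>N N k))^2) \<le> K * S" for N M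
  proof -
    have "(\<Sum>k\<le>M. (norm (a\<^sub>N N k))^2) \<le> K * (\<Sum>n\<le>N. (norm (\<alpha> n))^2)"
      unfolding a\<^sub>N_def K_def
      by (rule sum_le_of_weighted_sums_le) (rule Taylor_coeffs_comp_poly_le[OF hol_\<phi> \<phi>])
    also have "\<dots> \<le> K * S"
      unfolding S_def by (intro mult_left_mono \<open>K \<ge> 0\<close> sum_le_suminf sq) auto
    finally show ?thesis .
  qed
  have bounded: "(\<Sum>k<M. (norm (a k))^2) \<le> K * S" for M
  proof (rule LIMSEQ_le_const2)
    show "(\<lambda>N. \<Sum>k<M. (norm (a\<^sub>N N k))^2) \<longlonglongrightarrow> (\<Sum>k<M. (norm (a k))^2)"
      unfolding a\<^sub>N_def a_def
      by (intro tendsto_intros Taylor_coeffs_comp_partial_sums_tendsto[OF hol_\<phi> \<phi> sq])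
    have "(\<Sum>k<M. (norm (a\<^sub>N N k))^2) \<le> (\<Sum>k\<le>M. (norm (a\<^sub>N N k))^2)" for N
      by (rule sum_mono2) auto
    with partial show "\<exists>N0. \<forall>N\<ge>N0. (\<Sum>k<M. (norm (a\<^sub>N N k))^2) \<le> K * S"
      using order_trans by blast
  qed
  show sa: "summable (\<lambda>k. (norm (a k))^2)" by (rule summableI_nonneg_bounded[OF _ bounded]) simp
  show "(\<Sum>k. (norm (a k))^2) \<le> K * S" by (rule suminf_le_const[OF sa bounded])
qed

section \<open>Operators acting on a slice by a pair of compositions\<close>

lemma H2_slice_split:
  assumes I: "I \<in> imag_units" and a: "H2 a"
  shows "summable (\<lambda>n. (norm (slice_fst I (a n)))^2)" "summable (\<lambda>n. (norm (slice_snd I (a n)))^2)"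
    "(\<Sum>n. (norm (a n))^2) = (\<Sum>n. (norm (slice_fst I (a n)))^2) + (\<Sum>n. (norm (slice_snd I (a n)))^2)"
proof -
  note split = norm_sq_slice_fst_snd[OF I]
  have sa: "summable (\<lambda>n. (norm (a n))^2)" using a by (simp add: H2_def)
  show s1: "summable (\<lambda>n. (norm (slice_fst I (a n)))^2)"
    and s2: "summable (\<lambda>n. (norm (slice_snd I (a n)))^2)"
    by (auto intro!: summable_comparison_test[OF _ sa] simp: split)
  show "(\<Sum>n. (norm (a n))^2) = (\<Sum>n. (norm (slice_fst I (a n)))^2) + (\<Sum>n. (norm (slice_snd I (a n)))^2)"
    unfolding split by (rule suminf_add[OF s1 s2, symmetric])
qed

lemma represents_coeff_0: "represents F c \<Longrightarrow> c 0 = F 0"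
proof -
  assume "represents F c"
  then have "(\<lambda>k. hmul (hpow 0 k) (c k)) sums F 0" by (simp add: represents_def qball_def)
  moreover have "(\<lambda>k. hmul (hpow 0 k) (c k)) = (\<lambda>k. if k = 0 then c 0 else 0)"
    by (auto simp: fun_eq_iff hpow_zero)
  then have "(\<lambda>k. hmul (hpow 0 k) (c k)) sums c 0"
    using sums_single[of 0 "\<lambda>_. c 0"] by simp
  ultimately show ?thesis using sums_unique2 by blast
qed

lemma norm_coeff_le_h2norm: "H2 c \<Longrightarrow> norm (c n) \<le> h2norm c"
  using sum_le_suminf[of "\<lambda>n. (norm (c n))^2" "{n}"]
  by (simp add: H2_def h2norm_def real_le_rsqrt)

lemma opnorm_le_sqrt:
  assumes "K \<ge> 0"
    and image: "\<And>a. H2 a \<Longrightarrow> \<exists>c. H2 c \<and> represents (series_fun T a) c \<and>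
      (\<Sum>n. (norm (c n))^2) \<le> K * (\<Sum>n. (norm (a n))^2)"
  shows "bdd_above (op_image_norms T)" "opnorm T \<le> sqrt K"
proof -
  have ub: "x \<le> sqrt K" if x: "x \<in> op_image_norms T" for x
  proof -
    obtain a c' where x: "x = h2norm c'" and a: "H2 a" "h2norm a \<le> 1"
      and c': "represents (series_fun T a) c'"
      using x unfolding op_image_norms_def by blast
    obtain c where c: "represents (series_fun T a) c" "(\<Sum>n. (norm (c n))^2) \<le> K * (\<Sum>n. (norm (a n))^2)"
      using image[OF a(1)] by blast
    have "(\<Sum>n. (norm (a n))^2) \<le> 1" using a(2) by (simp add: h2norm_def)
    then have "(\<Sum>n. (norm (c n))^2) \<le> K"
      using mult_left_mono[OF _ \<open>K \<ge> 0\<close>] c(2) by fastforce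
    then show ?thesis unfolding x represents_unique[OF c' c(1)] h2norm_def by simp
  qed
  then show "bdd_above (op_image_norms T)" by (auto simp: bdd_above_def)
  have "H2 (\<lambda>_. 0)" by (simp add: H2_def)
  then obtain c0 where "represents (series_fun T (\<lambda>_. 0)) c0" using image by blast
  then have "h2norm c0 \<in> op_image_norms T"
    unfolding op_image_norms_def
    by (intro CollectI exI[of _ "\<lambda>_. 0"] exI[of _ c0]) (simp add: H2_def h2norm_def)
  with ub show "opnorm T \<le> sqrt K" unfolding opnorm_def by (intro cSup_least) auto
qed

lemma h2norm_le_opnorm:
  assumes "bdd_above (op_image_norms T)" "H2 a" "h2norm a \<le> 1" "represents (series_fun T a) c"
  shows "h2norm c \<le> opnorm T"
  unfolding opnorm_def using assms by (intro cSup_upper) (auto simp: op_image_norms_def)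

locale slice_composition_operator =
  fixes I :: quat and T :: "(nat \<Rightarrow> quat) \<Rightarrow> nat \<Rightarrow> quat \<Rightarrow> quat"
    and \<psi>\<^sub>1 \<psi>\<^sub>2 :: "complex \<Rightarrow> complex" and \<rho> :: real
  assumes I: "I \<in> imag_units"
    and hol\<^sub>1: "\<psi>\<^sub>1 holomorphic_on ball 0 1" and self_map\<^sub>1: "\<And>z. norm z < 1 \<Longrightarrow> norm (\<psi>\<^sub>1 z) < 1"
    and hol\<^sub>2: "\<psi>\<^sub>2 holomorphic_on ball 0 1" and self_map\<^sub>2: "\<And>z. norm z < 1 \<Longrightarrow> norm (\<psi>\<^sub>2 z) < 1"
    and norm_0\<^sub>1: "norm (\<psi>\<^sub>1 0) = \<rho>" and norm_0\<^sub>2: "norm (\<psi>\<^sub>2 0) = \<rho>"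
    and T_slice: "\<And>a n w. norm w < 1 \<Longrightarrow> T a n (slice_emb I w) =
      slice_pair I ((\<psi>\<^sub>1 w)^n * slice_fst I (a n)) ((\<psi>\<^sub>2 w)^n * slice_snd I (a n))"
    and T_repr: "\<And>a n K w. K \<in> imag_units \<Longrightarrow> norm w < 1 \<Longrightarrow>
      T a n (slice_emb K w) = repr_formula I K (T a n (slice_emb I w)) (T a n (slice_emb I (cnj w)))"
begin

lemma rho_bounds: "0 \<le> \<rho>" "\<rho> < 1"
  using norm_0\<^sub>1 self_map\<^sub>1[of 0] by auto

lemma sums_T_slice:
  assumes "H2 a" "norm w < 1"
  shows "(\<lambda>n. T a n (slice_emb I w)) sums
    slice_pair I (\<Sum>n. slice_fst I (a n) * (\<psi>\<^sub>1 w)^n) (\<Sum>n. slice_snd I (a n) * (\<psi>\<^sub>2 w)^n)"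
proof -
  note sq = H2_slice_split[OF I assms(1)]
  have "(\<lambda>n. (\<psi>\<^sub>1 w)^n * slice_fst I (a n)) sums (\<Sum>n. slice_fst I (a n) * (\<psi>\<^sub>1 w)^n)"
    "(\<lambda>n. (\<psi>\<^sub>2 w)^n * slice_snd I (a n)) sums (\<Sum>n. slice_snd I (a n) * (\<psi>\<^sub>2 w)^n)"
    using summable_powser_of_sq[OF sq(1) self_map\<^sub>1[OF assms(2)]]
      summable_powser_of_sq[OF sq(2) self_map\<^sub>2[OF assms(2)]]
    by (simp_all add: summable_sums mult.commute)
  from sums_slice_pair[OF this] show ?thesis by (simp add: T_slice[OF assms(2)])
qed

text \<open>The image of \<open>f\<close> has as coefficients the slice pairs of the Taylor coefficients of
  \<open>f\<^sub>1 \<circ> \<psi>\<^sub>1\<close> and \<open>f\<^sub>2 \<circ> \<psi>\<^sub>2\<close>.\<close>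

lemma image_in_H2:
  assumes a: "H2 a"
  shows "\<exists>c. H2 c \<and> represents (series_fun T a) c \<and> (\<forall>q\<in>qball. summable (\<lambda>n. T a n q))
     \<and> (\<Sum>n. (norm (c n))^2) \<le> (1 + \<rho>) / (1 - \<rho>) * (\<Sum>n. (norm (a n))^2)"
proof -
  note sq = H2_slice_split[OF I a]
  define G\<^sub>1 G\<^sub>2 where "G\<^sub>1 z = (\<Sum>n. slice_fst I (a n) * (\<psi>\<^sub>1 z)^n)" and "G\<^sub>2 z = (\<Sum>n. slice_snd I (a n) * (\<psi>\<^sub>2 z)^n)"
    for z
  define \<gamma>\<^sub>1 \<gamma>\<^sub>2 where "\<gamma>\<^sub>1 k = (deriv^^k) G\<^sub>1 0 / fact k" and "\<gamma>\<^sub>2 k = (deriv^^k) G\<^sub>2 0 / fact k" for k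
  define c where "c k = slice_pair I (\<gamma>\<^sub>1 k) (\<gamma>\<^sub>2 k)" for k
  have B\<^sub>1: "summable (\<lambda>k. (norm (\<gamma>\<^sub>1 k))^2)"
      "(\<Sum>k. (norm (\<gamma>\<^sub>1 k))^2) \<le> (1 + \<rho>) / (1 - \<rho>) * (\<Sum>n. (norm (slice_fst I (a n)))^2)"
    using composition_H2_bound[OF hol\<^sub>1 self_map\<^sub>1 sq(1)] norm_0\<^sub>1
    by (simp_all add: \<gamma>\<^sub>1_def G\<^sub>1_def[abs_def])
  have B\<^sub>2: "summable (\<lambda>k. (norm (\<gamma>\<^sub>2 k))^2)"
      "(\<Sum>k. (norm (\<gamma>\<^sub>2 k))^2) \<le> (1 + \<rho>) / (1 - \<rho>) * (\<Sum>n. (norm (slice_snd I (a n)))^2)"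
    using composition_H2_bound[OF hol\<^sub>2 self_map\<^sub>2 sq(2)] norm_0\<^sub>2
    by (simp_all add: \<gamma>\<^sub>2_def G\<^sub>2_def[abs_def])
  have c_sums: "(\<lambda>k. hmul (hpow (slice_emb I w) k) (c k)) sums slice_pair I (G\<^sub>1 w) (G\<^sub>2 w)"
    if w: "norm w < 1" for w
  proof -
    have "G\<^sub>1 holomorphic_on ball 0 1" "G\<^sub>2 holomorphic_on ball 0 1"
      unfolding G\<^sub>1_def[abs_def] G\<^sub>2_def[abs_def]
      by (intro holomorphic_on_comp_powser_of_sq hol\<^sub>1 hol\<^sub>2 self_map\<^sub>1 self_map\<^sub>2 sq; assumption)+
    from this[THEN holomorphic_power_series, of w] w
    have "(\<lambda>k. w^k * \<gamma>\<^sub>1 k) sums G\<^sub>1 w" "(\<lambda>k. w^k * \<gamma>\<^sub>2 k) sums G\<^sub>2 w"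
      by (simp_all add: \<gamma>\<^sub>1_def \<gamma>\<^sub>2_def mult.commute)
    from sums_slice_pair[OF this] show ?thesis
      by (simp add: c_def hpow_slice_emb[OF I] hmul_slice_emb_slice_pair[OF I])
  qed
  have ext: "summable (\<lambda>n. T a n q)" "(\<lambda>k. hmul (hpow q k) (c k)) sums (\<Sum>n. T a n q)"
    if "q \<in> qball" for q
    using sums_extend_from_slice[OF I T_repr sums_T_slice[OF a] c_sums[unfolded G\<^sub>1_def G\<^sub>2_def] that]
    by blast+
  have norm_c: "(norm (c k))^2 = (norm (\<gamma>\<^sub>1 k))^2 + (norm (\<gamma>\<^sub>2 k))^2" for k
    unfolding c_def by (rule norm_slice_pair[OF I])
  have "H2 c" unfolding H2_def norm_c by (rule summable_add[OF B\<^sub>1(1) B\<^sub>2(1)])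
  moreover have "represents (series_fun T a) c"
    unfolding represents_def series_fun_def using ext by blast
  moreover have "(\<Sum>n. (norm (c n))^2) \<le> (1 + \<rho>) / (1 - \<rho>) * (\<Sum>n. (norm (a n))^2)"
    using B\<^sub>1(2) B\<^sub>2(2)
    unfolding norm_c suminf_add[OF B\<^sub>1(1) B\<^sub>2(1), symmetric] sq(3) distrib_left by simp
  ultimately show ?thesis using ext by blast
qed

lemma bounded: "bounded_H2_op T"
  and opnorm_le: "opnorm T \<le> sqrt ((1 + \<rho>) / (1 - \<rho>))"
proof -
  have K: "(1 + \<rho>) / (1 - \<rho>) \<ge> 0" using rho_bounds by simp
  have image: "\<exists>c. H2 c \<and> represents (series_fun T a) c \<and>
      (\<Sum>n. (norm (c n))^2) \<le> (1 + \<rho>) / (1 - \<rho>) * (\<Sum>n. (norm (a n))^2)" if "H2 a" for a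
    using image_in_H2[OF that] by blast
  note opnorm_le_sqrt[OF K image]
  then show "bounded_H2_op T" "opnorm T \<le> sqrt ((1 + \<rho>) / (1 - \<rho>))"
    unfolding bounded_H2_op_def using image_in_H2 by auto
qed

text \<open>Testing on the normalized Szego kernel \<open>\<Sum>\<^sub>n s (cnj w)\<^sup>n z\<^sup>n\<close> at \<open>w = \<psi>\<^sub>1(0)\<close>, with
  \<open>s = (1 - \<rho>\<^sup>2)\<^sup>1\<^sup>/\<^sup>2\<close>: the constant coefficient of its image is \<open>s / (1 - \<rho>\<^sup>2)\<close>.\<close>

lemma opnorm_ge: "sqrt (1 / (1 - \<rho>^2)) \<le> opnorm T"
proof -
  define w s where "w = \<psi>\<^sub>1 0" and "s = sqrt (1 - \<rho>^2)"
  have r2: "\<rho>^2 < 1" using rho_bounds by (simp add: abs_square_less_1)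
  have s: "s > 0" "s^2 = 1 - \<rho>^2" using r2 by (simp_all add: s_def)
  define a where "a n = slice_emb I (of_real s * cnj w ^ n)" for n
  have "(\<lambda>n. (norm (a n))^2) = (\<lambda>n. s^2 * (\<rho>^2)^n)"
    by (simp add: fun_eq_iff a_def norm_slice_emb[OF I] norm_mult norm_power w_def norm_0\<^sub>1
        power_mult_distrib power_mult[symmetric] mult.commute)
  then have "(\<lambda>n. (norm (a n))^2) sums 1"
    using sums_mult[OF geometric_sums[of "\<rho>^2"], of "s^2"] r2 s by simp
  then have a: "H2 a" "h2norm a = 1"
    by (auto simp: H2_def h2norm_def sums_iff)
  obtain c where c: "H2 c" "represents (series_fun T a) c" using image_in_H2[OF a(1)] by blast
  have "(\<lambda>n. of_real s * (cnj w * w)^n) sums (of_real s * (1 / (1 - cnj w * w)))"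
    using r2 by (intro sums_mult geometric_sums) (simp add: norm_mult w_def norm_0\<^sub>1 power2_eq_square)
  moreover have "cnj w * w = of_real (\<rho>^2)"
    using norm_0\<^sub>1 unfolding w_def by (metis complex_norm_square mult.commute)
  ultimately have "(\<lambda>n. slice_fst I (a n) * (\<psi>\<^sub>1 0)^n) sums of_real (s / (1 - \<rho>^2))"
    by (simp add: a_def slice_fst_slice_emb[OF I] w_def power_mult_distrib mult.assoc mult.left_commute)
  moreover have "slice_snd I (a n) = 0" for n by (simp add: a_def slice_snd_slice_emb[OF I])
  ultimately have "series_fun T a 0 = slice_pair I (of_real (s / (1 - \<rho>^2))) 0"
    using sums_T_slice[OF a(1), of 0] by (simp add: series_fun_def sums_iff)
  then have "norm (c 0) = s / (1 - \<rho>^2)"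
    using represents_coeff_0[OF c(2)] s r2
    by (simp add: norm_slice_emb[OF I] del: of_real_divide of_real_diff of_real_power
        flip: slice_emb_eq_slice_pair)
  moreover have "sqrt (1 / (1 - \<rho>^2)) = s / (1 - \<rho>^2)"
    using s r2 by (simp add: s_def real_sqrt_divide field_simps)
  ultimately have "sqrt (1 / (1 - \<rho>^2)) \<le> h2norm c" using norm_coeff_le_h2norm[OF c(1), of 0] by simp
  also have "\<dots> \<le> opnorm T"
    using h2norm_le_opnorm[OF _ a(1) _ c(2)] bounded a(2) by (simp add: bounded_H2_op_def)
  finally show ?thesis .
qed

end

section \<open>Slice-preserving symbols\<close>

text \<open>The projection onto the orthogonal complement of \<open>\<complex>\<^sub>I\<close> kills \<open>\<phi>\<close> on the real diameter, so by
  uniqueness of coefficients it kills every coefficient.\<close>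

lemma coeffs_in_slice:
  assumes I: "I \<in> imag_units" and reg: "slice_regular_ball b"
    and slice_pres: "\<forall>q\<in>qball \<inter> slice I. pseval b q \<in> qball \<inter> slice I"
  shows "b j = slice_emb I (slice_fst I (b j))"
proof -
  define P where "P q = q - slice_emb I (slice_fst I q)" for q
  have P: "bounded_linear P"
    unfolding P_def[abs_def]
    by (intro bounded_linear_sub bounded_linear_ident
        bounded_linear_compose[OF bounded_linear_slice_emb bounded_linear_slice_fst])
  have P_slice: "P q = 0" if q: "q \<in> slice I" for q
  proof -
    obtain r s where "q = r *\<^sub>R hone + s *\<^sub>R I" using q by (auto simp: slice_def)
    then have "q = slice_emb I (Complex r s)" by (simp add: slice_emb_def)
    then show ?thesis by (simp add: P_def slice_fst_slice_emb[OF I])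
  qed
  have real_in: "x *\<^sub>R hone \<in> qball \<inter> slice I" if "\<bar>x\<bar> < 1" for x
  proof -
    have "x *\<^sub>R hone \<in> slice I"
      unfolding slice_def by (rule CollectI, rule exI[of _ x], rule exI[of _ 0]) simp
    with that show ?thesis by (simp add: scaleR_hone_in_qball_iff)
  qed
  have "P \<circ> b = (\<lambda>_. 0)"
  proof (rule coeffs_unique_on_real_axis[where F = "\<lambda>_. 0"])
    fix x :: real assume x: "\<bar>x\<bar> < 1"
    have "summable (\<lambda>n. hmul (hpow (x *\<^sub>R hone) n) (b n))"
      using reg real_in[OF x] by (auto simp: slice_regular_ball_def)
    from bounded_linear.sums[OF P summable_sums[OF this]]
    have "(\<lambda>n. P (hmul (hpow (x *\<^sub>R hone) n) (b n))) sums P (pseval b (x *\<^sub>R hone))"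
      by (simp add: pseval_def)
    moreover have "P (pseval b (x *\<^sub>R hone)) = 0" using slice_pres real_in[OF x] P_slice by blast
    moreover have "P (hmul (hpow (x *\<^sub>R hone) n) (b n)) = hmul (hpow (x *\<^sub>R hone) n) ((P \<circ> b) n)" for n
      by (simp add: hpow_scaleR_hone hmul_scaleR_left linear_simps(5)[OF P])
    ultimately show "(\<lambda>n. hmul (hpow (x *\<^sub>R hone) n) ((P \<circ> b) n)) sums 0" by simp
  qed simp
  then show ?thesis by (simp add: fun_eq_iff P_def)
qed

lemma fps_conv_radius_slice_fst:
  assumes I: "I \<in> imag_units" and reg: "slice_regular_ball b"
    and coeffs: "\<And>j. b j = slice_emb I (\<beta> j)"
  shows "fps_conv_radius (Abs_fps \<beta>) \<ge> 1"
proof (rule fps_conv_radius_ge_1I)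
  fix z :: complex assume "norm z < 1"
  then have "summable (\<lambda>n. hmul (hpow (slice_emb I z) n) (b n))"
    using reg slice_emb_in_qball_iff[OF I] by (simp add: slice_regular_ball_def)
  then have "summable (\<lambda>n. slice_emb I (z^n * \<beta> n))"
    by (simp add: coeffs hpow_slice_emb[OF I] hmul_slice_emb[OF I])
  from bounded_linear.summable[OF bounded_linear_slice_fst[of I] this]
  show "summable (\<lambda>n. \<beta> n * z^n)" by (simp add: slice_fst_slice_emb[OF I] mult.commute)
qed

lemma sums_eval_fps_power:
  fixes F :: "'a::{banach, real_normed_div_algebra, comm_ring_1} fps"
  assumes "norm z < fps_conv_radius F"
  shows "(\<lambda>k. fps_nth (F ^ n) k * z^k) sums (eval_fps F z)^n"
proof -
  have "norm z < fps_conv_radius (F ^ n)" using assms fps_conv_radius_power less_le_trans by blast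
  then have "(\<lambda>k. fps_nth (F ^ n) k * z^k) sums eval_fps (F ^ n) z"
    unfolding eval_fps_def by (rule summable_sums[OF summable_fps])
  with eval_fps_power[OF assms] show ?thesis by simp
qed

lemma fps_nth_power_cnj:
  "fps_nth (Abs_fps (\<lambda>j. cnj (\<beta> j)) ^ n) k = cnj (fps_nth (Abs_fps \<beta> ^ n) k)"
  by (induction n arbitrary: k) (simp_all add: fps_mult_nth)

lemma fps_conv_radius_cnj: "fps_conv_radius (Abs_fps (\<lambda>j. cnj (\<beta> j))) = fps_conv_radius (Abs_fps \<beta>)"
  unfolding fps_conv_radius_def by (rule conv_radius_cong) simp

lemma eval_fps_cnj:
  assumes "norm z < fps_conv_radius (Abs_fps \<beta>)"
  shows "eval_fps (Abs_fps (\<lambda>j. cnj (\<beta> j))) z = cnj (eval_fps (Abs_fps \<beta>) (cnj z))"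
proof -
  have "(\<lambda>n. \<beta> n * cnj z ^ n) sums eval_fps (Abs_fps \<beta>) (cnj z)"
    using summable_sums[OF summable_fps[of "cnj z" "Abs_fps \<beta>"]] assms by (simp add: eval_fps_def)
  then have "(\<lambda>n. cnj (\<beta> n) * z ^ n) sums cnj (eval_fps (Abs_fps \<beta>) (cnj z))"
    by (subst sums_cnj[symmetric]) simp
  then show ?thesis by (simp add: eval_fps_def sums_iff)
qed

text \<open>In this locale \<open>b\<close> is the coefficient sequence of \<open>\<phi>\<close>, whose restriction to \<open>\<complex>\<^sub>I\<close> is the complex
  power series \<open>\<phi>\<^sub>I\<close> with coefficients \<open>\<beta>\<close>; \<open>\<phi>\<^sub>I\<^sup>*(z) = cnj (\<phi>\<^sub>I (cnj z))\<close> is the function that appears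
  when \<open>\<phi>\<^sub>I\<close> is moved past the component \<open>J\<close>.\<close>

locale slice_preserving_symbol =
  fixes I :: quat and b :: "nat \<Rightarrow> quat" and \<beta> :: "nat \<Rightarrow> complex"
  assumes I: "I \<in> imag_units"
    and coeffs: "\<And>j. b j = slice_emb I (\<beta> j)"
    and radius: "fps_conv_radius (Abs_fps \<beta>) \<ge> 1"
begin

abbreviation \<phi>\<^sub>I :: "complex \<Rightarrow> complex" where "\<phi>\<^sub>I \<equiv> eval_fps (Abs_fps \<beta>)"
abbreviation \<phi>\<^sub>I_cnj :: "complex \<Rightarrow> complex" where "\<phi>\<^sub>I_cnj \<equiv> eval_fps (Abs_fps (\<lambda>j. cnj (\<beta> j)))"

lemma in_radius:
  assumes "norm (z::complex) < 1"
  shows "norm z < fps_conv_radius (Abs_fps \<beta>)"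
proof -
  have "ereal (norm z) < 1" using assms by simp
  then show ?thesis using radius by (rule less_le_trans)
qed

lemma holomorphic: "\<phi>\<^sub>I holomorphic_on ball 0 1" "\<phi>\<^sub>I_cnj holomorphic_on ball 0 1"
  using in_radius by (auto intro!: holomorphic_on_eval_fps simp: fps_conv_radius_cnj)

lemma \<phi>\<^sub>I_cnj_eq: "norm z < 1 \<Longrightarrow> \<phi>\<^sub>I_cnj z = cnj (\<phi>\<^sub>I (cnj z))"
  by (rule eval_fps_cnj[OF in_radius]) simp

lemma spow_eq: "spow b n k = slice_emb I (fps_nth (Abs_fps \<beta> ^ n) k)"
proof (induction n arbitrary: k)
  case (Suc n)
  have "spow b (Suc n) k = (\<Sum>j\<le>k. slice_emb I (\<beta> j * fps_nth (Abs_fps \<beta> ^ n) (k - j)))"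
    by (simp add: sprod_def Suc coeffs hmul_slice_emb[OF I])
  also have "\<dots> = slice_emb I (fps_nth (Abs_fps \<beta> ^ Suc n) k)"
    by (simp add: slice_emb_sum fps_mult_nth atLeast0AtMost)
  finally show ?case .
qed (simp add: slice_emb_one)

lemma sums_spow:
  "norm w < 1 \<Longrightarrow> (\<lambda>k. hmul (hpow (slice_emb I w) k) (spow b n k)) sums slice_emb I ((\<phi>\<^sub>I w)^n)"
  unfolding spow_eq by (intro sums_hmul_hpow_slice_emb[OF I] sums_eval_fps_power in_radius)

lemma pseval_slice_emb:
  assumes "norm w < 1"
  shows "pseval b (slice_emb I w) = slice_emb I (\<phi>\<^sub>I w)"
proof -
  have "(\<lambda>k. \<beta> k * w^k) sums \<phi>\<^sub>I w"
    using summable_sums[OF summable_fps[OF in_radius[OF assms]]] by (simp add: eval_fps_def)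
  from sums_hmul_hpow_slice_emb[OF I this] show ?thesis by (simp add: pseval_def sums_iff coeffs)
qed

lemma sums_Dterm_summands:
  assumes w: "norm w < 1"
  shows "(\<lambda>k. hmul (hpow (slice_emb I w) k) (hmul (a n) (spow b n k))) sums
    slice_pair I (slice_fst I (a n) * (\<phi>\<^sub>I w)^n) (slice_snd I (a n) * (\<phi>\<^sub>I_cnj w)^n)"
proof -
  define p where "p k = fps_nth (Abs_fps \<beta> ^ n) k" for k
  have "hmul (hpow (slice_emb I w) k) (hmul (a n) (spow b n k)) =
      slice_pair I (w^k * (slice_fst I (a n) * p k)) (w^k * (slice_snd I (a n) * cnj (p k)))" for k
    using hmul_slice_pair_slice_emb[OF I, of "slice_fst I (a n)" "slice_snd I (a n)" "p k"]
    by (simp add: spow_eq p_def slice_pair_fst_snd[OF I] hpow_slice_emb[OF I] hmul_slice_emb_slice_pair[OF I])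
  moreover have "(\<lambda>k. w^k * (slice_fst I (a n) * p k)) sums (slice_fst I (a n) * (\<phi>\<^sub>I w)^n)"
    using sums_mult[OF sums_eval_fps_power[OF in_radius[OF w]], of "slice_fst I (a n)"]
    by (simp add: p_def algebra_simps)
  moreover have "(\<lambda>k. w^k * (slice_snd I (a n) * cnj (p k))) sums (slice_snd I (a n) * (\<phi>\<^sub>I_cnj w)^n)"
    using sums_mult[OF sums_eval_fps_power[where z=w and n=n and F="Abs_fps (\<lambda>j. cnj (\<beta> j))"], of "slice_snd I (a n)"] in_radius[OF w]
    by (simp add: p_def fps_conv_radius_cnj fps_nth_power_cnj algebra_simps)
  ultimately show ?thesis using sums_slice_pair by presburger
qed

lemma Cterm_operator:
  assumes "\<And>z. norm z < 1 \<Longrightarrow> norm (\<phi>\<^sub>I z) < 1"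
  shows "slice_composition_operator I (Cterm b) \<phi>\<^sub>I \<phi>\<^sub>I (norm (\<phi>\<^sub>I 0))"
proof
  fix a :: "nat \<Rightarrow> quat" and n :: nat and w :: complex assume w: "norm w < 1"
  have "pseval (spow b n) (slice_emb I w) = slice_emb I ((\<phi>\<^sub>I w)^n)"
    using sums_spow[OF w] by (simp add: pseval_def sums_iff)
  then show "Cterm b a n (slice_emb I w) =
      slice_pair I ((\<phi>\<^sub>I w)^n * slice_fst I (a n)) ((\<phi>\<^sub>I w)^n * slice_snd I (a n))"
    using hmul_slice_emb_slice_pair[OF I, of "(\<phi>\<^sub>I w)^n" "slice_fst I (a n)" "slice_snd I (a n)"]
    by (simp add: Cterm_def slice_pair_fst_snd[OF I])
next
  fix a :: "nat \<Rightarrow> quat" and n :: nat and K :: quat and w :: complex assume K: "K \<in> imag_units" and w: "norm w < 1"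
  then have "pseval (spow b n) (slice_emb K w) = repr_formula I K (pseval (spow b n) (slice_emb I w))
      (pseval (spow b n) (slice_emb I (cnj w)))"
    by (intro pseval_repr_formula[OF I K] sums_summable[OF sums_spow]) simp_all
  then show "Cterm b a n (slice_emb K w) =
      repr_formula I K (Cterm b a n (slice_emb I w)) (Cterm b a n (slice_emb I (cnj w)))"
    by (simp add: Cterm_def repr_formula_hmul_right)
qed (use I holomorphic assms in auto)

lemma Dterm_operator:
  assumes \<phi>: "\<And>z. norm z < 1 \<Longrightarrow> norm (\<phi>\<^sub>I z) < 1"
  shows "slice_composition_operator I (Dterm b) \<phi>\<^sub>I \<phi>\<^sub>I_cnj (norm (\<phi>\<^sub>I 0))"
proof
  fix a :: "nat \<Rightarrow> quat" and n :: nat and w :: complex assume "norm w < 1"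
  from sums_Dterm_summands[OF this] show "Dterm b a n (slice_emb I w) =
      slice_pair I ((\<phi>\<^sub>I w)^n * slice_fst I (a n)) ((\<phi>\<^sub>I_cnj w)^n * slice_snd I (a n))"
    by (simp add: Dterm_def pseval_def sums_iff mult.commute)
next
  fix a :: "nat \<Rightarrow> quat" and n :: nat and K :: quat and w :: complex assume K: "K \<in> imag_units" and w: "norm w < 1"
  then show "Dterm b a n (slice_emb K w) =
      repr_formula I K (Dterm b a n (slice_emb I w)) (Dterm b a n (slice_emb I (cnj w)))"
    unfolding Dterm_def by (intro pseval_repr_formula[OF I K] sums_summable[OF sums_Dterm_summands]) simp_all
next
  show "norm z < 1 \<Longrightarrow> norm (\<phi>\<^sub>I_cnj z) < 1" for z using \<phi>[of "cnj z"] by (simp add: \<phi>\<^sub>I_cnj_eq)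
  show "norm (\<phi>\<^sub>I_cnj 0) = norm (\<phi>\<^sub>I 0)" by (simp add: \<phi>\<^sub>I_cnj_eq)
qed (use I holomorphic \<phi> in auto)

end

theorem corollary7p2:
  fixes b :: "nat \<Rightarrow> quat"
  assumes reg: "slice_regular_ball b"
    and self_map: "\<forall>q\<in>qball. pseval b q \<in> qball"
    and slice_pres: "\<exists>I\<in>imag_units. \<forall>q\<in>qball \<inter> slice I. pseval b q \<in> qball \<inter> slice I"
  shows "bounded_H2_op (Cterm b) \<and> bounded_H2_op (Dterm b)
    \<and> sqrt (1 / (1 - (norm (pseval b 0))^2)) \<le> opnorm (Cterm b)
    \<and> opnorm (Cterm b) \<le> sqrt ((1 + norm (pseval b 0)) / (1 - norm (pseval b 0)))
    \<and> sqrt (1 / (1 - (norm (pseval b 0))^2)) \<le> opnorm (Dterm b)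
    \<and> opnorm (Dterm b) \<le> sqrt ((1 + norm (pseval b 0)) / (1 - norm (pseval b 0)))"
proof -
  obtain I where I: "I \<in> imag_units" and pres: "\<forall>q\<in>qball \<inter> slice I. pseval b q \<in> qball \<inter> slice I"
    using slice_pres by blast
  define \<beta> where "\<beta> j = slice_fst I (b j)" for j
  have coeffs: "b j = slice_emb I (\<beta> j)" for j
    unfolding \<beta>_def by (rule coeffs_in_slice[OF I reg pres])
  interpret slice_preserving_symbol I b \<beta>
    using I coeffs fps_conv_radius_slice_fst[OF I reg coeffs] by unfold_locales
  have \<phi>: "norm (\<phi>\<^sub>I z) < 1" if z: "norm z < 1" for z
  proof -
    have "pseval b (slice_emb I z) \<in> qball"
      using self_map z slice_emb_in_qball_iff[OF I] by blast
    then show ?thesis using pseval_slice_emb[OF z] slice_emb_in_qball_iff[OF I] by simp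
  qed
  interpret C: slice_composition_operator I "Cterm b" \<phi>\<^sub>I \<phi>\<^sub>I "norm (\<phi>\<^sub>I 0)"
    by (rule Cterm_operator[OF \<phi>])
  interpret D: slice_composition_operator I "Dterm b" \<phi>\<^sub>I \<phi>\<^sub>I_cnj "norm (\<phi>\<^sub>I 0)"
    by (rule Dterm_operator[OF \<phi>])
  have "norm (pseval b 0) = norm (\<phi>\<^sub>I 0)"
    using pseval_slice_emb[of 0] norm_slice_emb[OF I] by simp
  then show ?thesis
    using C.bounded C.opnorm_le C.opnorm_ge D.bounded D.opnorm_le D.opnorm_ge by simp
qed

end
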